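(* Let $(W,S)$ be a Coxeter system of rank $n$ with set of reflections $T$, $(s_1,\dots,s_n)$ an ordering of $S$, $h=s_1\cdots s_n$, and let $\Psi:\mathrm{Art}(W,S)\to\mathrm{Art}^*(W,T,h)$ be the group morphism with $\bar s_i\mapsto\{s_i\}$. If $\Psi$ is an isomorphism, then $(W,(s_1,\dots,s_n))$ is well-stabilized.
   Context: A Coxeter system $(W,S)$: $W=\langle S\mid (ss')^{m(s,s')}=1\text{ whenever } m(s,s')\neq\infty\rangle$ with $m$ symmetric, $m(s,s)=1$, $m(s,s')\in\{2,3,\dots,\infty\}$ for $s\neq s'$; $T$ is the set of conjugates of elements of $S$. For $a\in W$: $\ell_T(a)$ is the minimal $k$ with $a=t_1\cdots t_k$, $t_i\in T$; $\mathrm{Red}_T(a)$ is the set of such tuples of length $\ell_T(a)$; $a\le_T b$ iff $\ell_T(a)+\ell_T(a^{-1}b)=\ell_T(b)$; $[1,h]_T=\{a:a\le_T h\}$. $\mathrm{Art}(W,S)$ is generated by $\bar s_1,\dots,\bar s_n$ subject to $\bar s_i\bar s_j\bar s_i\cdots=\bar s_j\bar s_i\bar s_j\cdots$ (each side with $m(s_i,s_j)$ factors) for $i<j$ with $m(s_i,s_j)\neq\infty$. $\mathrm{Art}^*(W,T,h)$ is generated by symbols $\{t\}$, $t\in T\cap[1,h]_T$, subject to $\{t_1\}\cdots\{t_k\}=\{t'_1\}\cdots\{t'_k\}$ for all $a\in[1,h]_T$ and $(t_1,\dots,t_k),(t'_1,\dots,t'_k)\in\mathrm{Red}_T(a)$;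 $\Psi$ is a well-defined morphism. The braid group $B_n$ acts on $G^n$ by the Hurwitz action $\sigma_i\cdot(g_1,\dots,g_n)=(g_1,\dots,g_{i-1},g_ig_{i+1}g_i^{-1},g_i,g_{i+2},\dots,g_n)$. $(W,(s_1,\dots,s_n))$ is well-stabilized if the stabilizer in $B_n$ of $(s_1,\dots,s_n)\in W^n$ equals the stabilizer of $(\bar s_1,\dots,\bar s_n)\in\mathrm{Art}(W,S)^n$. *)

theory Defs
  imports "HOL-Algebra.Group" "HOL-Library.Extended_Nat"
begin

text \<open>Words over a generating set: a letter (a, True) is the generator a,
  (a, False) is its inverse.\<close>

inductive pres_rel :: "'a set \<Rightarrow> ('a \<times> bool) list set \<Rightarrow> ('a \<times> bool) list \<Rightarrow> ('a \<times> bool) list \<Rightarrow> bool"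
  for X R where
  pr_refl: "pres_rel X R w w"
| pr_sym: "pres_rel X R u v \<Longrightarrow> pres_rel X R v u"
| pr_trans: "pres_rel X R u v \<Longrightarrow> pres_rel X R v w \<Longrightarrow> pres_rel X R u w"
| pr_cancel: "a \<in> X \<Longrightarrow> pres_rel X R (u @ [(a, b), (a, \<not> b)] @ v) (u @ v)"
| pr_relator: "r \<in> R \<Longrightarrow> pres_rel X R (u @ r @ v) (u @ v)"

definition pres_class :: "'a set \<Rightarrow> ('a \<times> bool) list set \<Rightarrow> ('a \<times> bool) list \<Rightarrow> ('a \<times> bool) list set" where
  "pres_class X R w = {v. pres_rel X R w v}"

definition presented_group :: "'a set \<Rightarrow> ('a \<times> bool) list set \<Rightarrow> ('a \<times> bool) list set monoid" where
  "presented_group X R =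
     \<lparr>carrier = {pres_class X R w | w. set w \<subseteq> X \<times> UNIV},
      mult = (\<lambda>A B. {w. \<exists>u\<in>A. \<exists>v\<in>B. pres_rel X R (u @ v) w}),
      one = pres_class X R []\<rparr>"

definition pres_gen :: "'a set \<Rightarrow> ('a \<times> bool) list set \<Rightarrow> 'a \<Rightarrow> ('a \<times> bool) list set" where
  "pres_gen X R a = pres_class X R [(a, True)]"

definition word_inv :: "('a \<times> bool) list \<Rightarrow> ('a \<times> bool) list" where
  "word_inv w = rev (map (\<lambda>(a, b). (a, \<not> b)) w)"

definition pos_word :: "'a list \<Rightarrow> ('a \<times> bool) list" where
  "pos_word xs = map (\<lambda>a. (a, True)) xs"

definition eq_relator :: "('a \<times> bool) list \<Rightarrow> ('a \<times> bool) list \<Rightarrow> ('a \<times> bool) list" where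
  "eq_relator u v = u @ word_inv v"

definition coxeter_matrix :: "nat \<Rightarrow> (nat \<Rightarrow> nat \<Rightarrow> enat) \<Rightarrow> bool" where
  "coxeter_matrix n M \<longleftrightarrow>
     (\<forall>i<n. M i i = 1) \<and> (\<forall>i<n. \<forall>j<n. M i j = M j i) \<and> (\<forall>i<n. \<forall>j<n. i \<noteq> j \<longrightarrow> 2 \<le> M i j)"

definition coxeter_relators :: "nat \<Rightarrow> (nat \<Rightarrow> nat \<Rightarrow> enat) \<Rightarrow> (nat \<times> bool) list set" where
  "coxeter_relators n M =
     {concat (replicate k [(i, True), (j, True)]) | i j k. i < n \<and> j < n \<and> M i j = enat k}"

definition coxeter_group :: "nat \<Rightarrow> (nat \<Rightarrow> nat \<Rightarrow> enat) \<Rightarrow> (nat \<times> bool) list set monoid" where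
  "coxeter_group n M = presented_group {..<n} (coxeter_relators n M)"

definition cox_gen :: "nat \<Rightarrow> (nat \<Rightarrow> nat \<Rightarrow> enat) \<Rightarrow> nat \<Rightarrow> (nat \<times> bool) list set" where
  "cox_gen n M i = pres_gen {..<n} (coxeter_relators n M) i"

definition cox_S :: "nat \<Rightarrow> (nat \<Rightarrow> nat \<Rightarrow> enat) \<Rightarrow> (nat \<times> bool) list set set" where
  "cox_S n M = cox_gen n M ` {..<n}"

definition cox_T :: "nat \<Rightarrow> (nat \<Rightarrow> nat \<Rightarrow> enat) \<Rightarrow> (nat \<times> bool) list set set" where
  "cox_T n M = {g \<otimes>\<^bsub>coxeter_group n M\<^esub> s \<otimes>\<^bsub>coxeter_group n M\<^esub> inv\<^bsub>coxeter_group n M\<^esub> g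
                 | g s. g \<in> carrier (coxeter_group n M) \<and> s \<in> cox_S n M}"

definition cox_prod :: "nat \<Rightarrow> (nat \<Rightarrow> nat \<Rightarrow> enat) \<Rightarrow> (nat \<times> bool) list set list \<Rightarrow> (nat \<times> bool) list set" where
  "cox_prod n M ts = foldr (\<lambda>x y. x \<otimes>\<^bsub>coxeter_group n M\<^esub> y) ts \<one>\<^bsub>coxeter_group n M\<^esub>"

definition refl_length :: "nat \<Rightarrow> (nat \<Rightarrow> nat \<Rightarrow> enat) \<Rightarrow> (nat \<times> bool) list set \<Rightarrow> nat" where
  "refl_length n M a = (LEAST k. \<exists>ts. set ts \<subseteq> cox_T n M \<and> length ts = k \<and> cox_prod n M ts = a)"

definition red_T :: "nat \<Rightarrow> (nat \<Rightarrow> nat \<Rightarrow> enat) \<Rightarrow> (nat \<times> bool) list set \<Rightarrow> (nat \<times> bool) list set list set" where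
  "red_T n M a = {ts. set ts \<subseteq> cox_T n M \<and> length ts = refl_length n M a \<and> cox_prod n M ts = a}"

definition T_le :: "nat \<Rightarrow> (nat \<Rightarrow> nat \<Rightarrow> enat) \<Rightarrow> (nat \<times> bool) list set \<Rightarrow> (nat \<times> bool) list set \<Rightarrow> bool" where
  "T_le n M a b \<longleftrightarrow>
     refl_length n M a + refl_length n M (inv\<^bsub>coxeter_group n M\<^esub> a \<otimes>\<^bsub>coxeter_group n M\<^esub> b) = refl_length n M b"

definition cox_elem :: "nat \<Rightarrow> (nat \<Rightarrow> nat \<Rightarrow> enat) \<Rightarrow> (nat \<times> bool) list set" where
  "cox_elem n M = cox_prod n M (map (cox_gen n M) [0..<n])"

definition nc_interval :: "nat \<Rightarrow> (nat \<Rightarrow> nat \<Rightarrow> enat) \<Rightarrow> (nat \<times> bool) list set set" where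
  "nc_interval n M = {a \<in> carrier (coxeter_group n M). T_le n M a (cox_elem n M)}"

definition alt_word :: "nat \<Rightarrow> nat \<Rightarrow> nat \<Rightarrow> nat list" where
  "alt_word i j k = map (\<lambda>l. if even l then i else j) [0..<k]"

definition artin_relators :: "nat \<Rightarrow> (nat \<Rightarrow> nat \<Rightarrow> enat) \<Rightarrow> (nat \<times> bool) list set" where
  "artin_relators n M =
     {eq_relator (pos_word (alt_word i j k)) (pos_word (alt_word j i k)) | i j k. i < j \<and> j < n \<and> M i j = enat k}"

definition artin_group :: "nat \<Rightarrow> (nat \<Rightarrow> nat \<Rightarrow> enat) \<Rightarrow> (nat \<times> bool) list set monoid" where
  "artin_group n M = presented_group {..<n} (artin_relators n M)"

definition art_gen :: "nat \<Rightarrow> (nat \<Rightarrow> nat \<Rightarrow> enat) \<Rightarrow> nat \<Rightarrow> (nat \<times> bool) list set" where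
  "art_gen n M i = pres_gen {..<n} (artin_relators n M) i"

definition dual_gens :: "nat \<Rightarrow> (nat \<Rightarrow> nat \<Rightarrow> enat) \<Rightarrow> (nat \<times> bool) list set set" where
  "dual_gens n M = cox_T n M \<inter> nc_interval n M"

definition dual_relators :: "nat \<Rightarrow> (nat \<Rightarrow> nat \<Rightarrow> enat) \<Rightarrow> ((nat \<times> bool) list set \<times> bool) list set" where
  "dual_relators n M =
     {eq_relator (pos_word ts) (pos_word ts') | a ts ts'.
        a \<in> nc_interval n M \<and> ts \<in> red_T n M a \<and> ts' \<in> red_T n M a}"

definition dual_artin_group :: "nat \<Rightarrow> (nat \<Rightarrow> nat \<Rightarrow> enat) \<Rightarrow> ((nat \<times> bool) list set \<times> bool) list set monoid" where
  "dual_artin_group n M = presented_group (dual_gens n M) (dual_relators n M)"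

definition dual_psi :: "nat \<Rightarrow> (nat \<Rightarrow> nat \<Rightarrow> enat) \<Rightarrow> (nat \<times> bool) list set \<Rightarrow> ((nat \<times> bool) list set \<times> bool) list set" where
  "dual_psi n M \<beta> = pres_class (dual_gens n M) (dual_relators n M)
                      (map (\<lambda>(i, b). (cox_gen n M i, b)) (SOME w. w \<in> \<beta>))"

text \<open>Braid group on n strands with generators \<open>\<sigma>_0, ..., \<sigma>_(n-2)\<close>.\<close>
definition braid_relators :: "nat \<Rightarrow> (nat \<times> bool) list set" where
  "braid_relators n =
     {eq_relator (pos_word [i, j]) (pos_word [j, i]) | i j. j < n - 1 \<and> i + 2 \<le> j}
     \<union> {eq_relator (pos_word [i, i + 1, i]) (pos_word [i + 1, i, i + 1]) | i. i + 1 < n - 1}"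

definition braid_group :: "nat \<Rightarrow> (nat \<times> bool) list set monoid" where
  "braid_group n = presented_group {..<n - 1} (braid_relators n)"

text \<open>Action of \<open>\<sigma>_i\<close> (b = True) and \<open>\<sigma>_i^{-1}\<close> (b = False) on tuples (0-based positions i, i+1).\<close>
definition hurwitz_gen :: "('g, 'b) monoid_scheme \<Rightarrow> nat \<times> bool \<Rightarrow> 'g list \<Rightarrow> 'g list" where
  "hurwitz_gen G ib gs = (case ib of (i, b) \<Rightarrow>
     (if b then gs[i := gs ! i \<otimes>\<^bsub>G\<^esub> gs ! (i + 1) \<otimes>\<^bsub>G\<^esub> inv\<^bsub>G\<^esub> (gs ! i), i + 1 := gs ! i]
      else gs[i := gs ! (i + 1), i + 1 := inv\<^bsub>G\<^esub> (gs ! (i + 1)) \<otimes>\<^bsub>G\<^esub> gs ! i \<otimes>\<^bsub>G\<^esub> gs ! (i + 1)]))"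

definition hurwitz_word :: "('g, 'b) monoid_scheme \<Rightarrow> (nat \<times> bool) list \<Rightarrow> 'g list \<Rightarrow> 'g list" where
  "hurwitz_word G w gs = foldr (hurwitz_gen G) w gs"

definition hurwitz_act :: "('g, 'b) monoid_scheme \<Rightarrow> (nat \<times> bool) list set \<Rightarrow> 'g list \<Rightarrow> 'g list" where
  "hurwitz_act G \<beta> gs = hurwitz_word G (SOME w. w \<in> \<beta>) gs"

definition braid_stabilizer :: "nat \<Rightarrow> ('g, 'b) monoid_scheme \<Rightarrow> 'g list \<Rightarrow> (nat \<times> bool) list set set" where
  "braid_stabilizer n G gs = {\<beta> \<in> carrier (braid_group n). hurwitz_act G \<beta> gs = gs}"

definition well_stabilized :: "nat \<Rightarrow> (nat \<Rightarrow> nat \<Rightarrow> enat) \<Rightarrow> bool" where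
  "well_stabilized n M \<longleftrightarrow>
     braid_stabilizer n (coxeter_group n M) (map (cox_gen n M) [0..<n])
     = braid_stabilizer n (artin_group n M) (map (art_gen n M) [0..<n])"

end

theory Submission
  imports Defs "HOL-Library.Function_Algebras" Complex_Main
begin

text \<open>The projection \<open>Art(W,S) \<rightarrow> W\<close> intertwines the Hurwitz actions, so every braid
  fixing \<open>(s\<^sub>1, ..., s\<^sub>n)\<close> in the Artin group fixes it in \<open>W\<close>.  Conversely, the Hurwitz
  action preserves the reflection factorizations of \<open>h = s\<^sub>1 \<cdots> s\<^sub>n\<close> of length \<open>n\<close>,
  and these are reduced: in a suitable linear representation each reflection moves vectors only
  along a line, while \<open>1 - h\<close> has rank at least \<open>n\<close>, so \<open>len_T h = n\<close>.  In a reduced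
  factorization every adjacent pair \<open>(t, t')\<close> is a reduced factorization of \<open>t t' \<in> [1,h]\<^sub>T\<close>,
  and so is \<open>(t t' t, t)\<close>; hence the dual relation \<open>{t}{t'} = {t t' t}{t}\<close> lifts the Hurwitz
  action along \<open>t \<mapsto> {t}\<close> to \<open>Art\<^sup>*(W,T,h)\<close>.  A braid fixing \<open>(s\<^sub>i)\<close> therefore fixes
  \<open>({s\<^sub>i})\<close>, the image under \<open>\<Psi>\<close> of the Artin generators, and injectivity of \<open>\<Psi>\<close>
  brings this back to the Artin group.\<close>

lemma pres_rel_append_cong:
  assumes "pres_rel X R u v"
  shows "pres_rel X R (p @ u @ q) (p @ v @ q)"
  using assms
proof (induction arbitrary: p q)
  case (pr_refl w)
  then show ?case by (rule pres_rel.pr_refl)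
next
  case (pr_sym u v)
  then show ?case by (blast intro: pres_rel.pr_sym)
next
  case (pr_trans u v w)
  then show ?case by (blast intro: pres_rel.pr_trans)
next
  case (pr_cancel a u b v)
  have "pres_rel X R ((p @ u) @ [(a, b), (a, \<not> b)] @ (v @ q)) ((p @ u) @ (v @ q))"
    using pr_cancel by (rule pres_rel.pr_cancel)
  then show ?case by simp
next
  case (pr_relator r u v)
  have "pres_rel X R ((p @ u) @ r @ (v @ q)) ((p @ u) @ (v @ q))"
    using pr_relator by (rule pres_rel.pr_relator)
  then show ?case by simp
qed

lemma pres_rel_append:
  assumes "pres_rel X R u u'" "pres_rel X R v v'"
  shows "pres_rel X R (u @ v) (u' @ v')"
  using pres_rel_append_cong[OF assms(1), of "[]" v] pres_rel_append_cong[OF assms(2), of u' "[]"]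
  by (auto intro: pres_rel.pr_trans)

lemma pres_rel_relator_trivial: "r \<in> R \<Longrightarrow> pres_rel X R r []"
  using pres_rel.pr_relator[of r R X "[]" "[]"] by simp

lemma pres_class_eq_iff: "pres_class X R u = pres_class X R v \<longleftrightarrow> pres_rel X R u v"
  unfolding pres_class_def
  by (auto intro: pres_rel.pr_refl pres_rel.pr_trans pres_rel.pr_sym)

lemma in_pres_class: "w \<in> pres_class X R w"
  by (simp add: pres_class_def pres_rel.pr_refl)

lemma some_in_pres_class: "pres_rel X R w (SOME v. v \<in> pres_class X R w)"
  using someI[of "\<lambda>v. v \<in> pres_class X R w", OF in_pres_class] by (simp add: pres_class_def)

lemma presented_group_mult:
  "pres_class X R u \<otimes>\<^bsub>presented_group X R\<^esub> pres_class X R v = pres_class X R (u @ v)"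
  unfolding presented_group_def pres_class_def
  by (auto intro: pres_rel.pr_trans pres_rel.pr_sym pres_rel_append pres_rel.pr_refl)

lemma presented_group_one: "\<one>\<^bsub>presented_group X R\<^esub> = pres_class X R []"
  by (simp add: presented_group_def)

lemma presented_group_carrier:
  "carrier (presented_group X R) = {pres_class X R w | w. set w \<subseteq> X \<times> UNIV}"
  by (simp add: presented_group_def)

lemma pres_class_in_carrier:
  "set w \<subseteq> X \<times> UNIV \<Longrightarrow> pres_class X R w \<in> carrier (presented_group X R)"
  by (auto simp: presented_group_carrier)

lemma word_inv_Nil [simp]: "word_inv [] = []"
  by (simp add: word_inv_def)

lemma word_inv_Cons: "word_inv ((a, b) # w) = word_inv w @ [(a, \<not> b)]"
  by (simp add: word_inv_def)

lemma word_inv_word_inv [simp]: "word_inv (word_inv w) = w"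
  by (simp add: word_inv_def rev_map comp_def case_prod_beta)

lemma map_fst_word_inv: "map fst (word_inv w) = rev (map fst w)"
  by (simp add: word_inv_def rev_map case_prod_beta comp_def)

lemma word_inv_alphabet: "set w \<subseteq> X \<times> UNIV \<Longrightarrow> set (word_inv w) \<subseteq> X \<times> UNIV"
  by (auto simp: word_inv_def)

lemma pres_rel_word_inv_left:
  assumes "set w \<subseteq> X \<times> UNIV"
  shows "pres_rel X R (word_inv w @ w) []"
  using assms
proof (induction w)
  case Nil
  then show ?case by (simp add: pres_rel.pr_refl)
next
  case (Cons x w)
  obtain a b where x: "x = (a, b)" by fastforce
  with Cons.prems have "pres_rel X R (word_inv w @ [(a, \<not> b), (a, \<not>\<not> b)] @ w) (word_inv w @ w)"
    by (intro pres_rel.pr_cancel) auto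
  then show ?case using Cons by (auto simp: x word_inv_Cons intro: pres_rel.pr_trans)
qed

lemma pres_rel_word_inv_right:
  "set w \<subseteq> X \<times> UNIV \<Longrightarrow> pres_rel X R (w @ word_inv w) []"
  using pres_rel_word_inv_left[OF word_inv_alphabet, of w X R] by simp

lemma group_presented_group: "group (presented_group X R)"
proof (rule groupI)
  fix x y
  assume "x \<in> carrier (presented_group X R)" "y \<in> carrier (presented_group X R)"
  then obtain u v where "x = pres_class X R u" "y = pres_class X R v"
    "set u \<subseteq> X \<times> UNIV" "set v \<subseteq> X \<times> UNIV"
    by (auto simp: presented_group_carrier)
  then show "x \<otimes>\<^bsub>presented_group X R\<^esub> y \<in> carrier (presented_group X R)"
    by (simp add: presented_group_mult pres_class_in_carrier)
next
  show "\<one>\<^bsub>presented_group X R\<^esub> \<in> carrier (presented_group X R)"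
    by (auto simp: presented_group_one intro!: pres_class_in_carrier)
next
  fix x y z
  assume "x \<in> carrier (presented_group X R)" "y \<in> carrier (presented_group X R)"
    "z \<in> carrier (presented_group X R)"
  then show "x \<otimes>\<^bsub>presented_group X R\<^esub> y \<otimes>\<^bsub>presented_group X R\<^esub> z =
      x \<otimes>\<^bsub>presented_group X R\<^esub> (y \<otimes>\<^bsub>presented_group X R\<^esub> z)"
    by (auto simp: presented_group_carrier presented_group_mult)
next
  fix x
  assume "x \<in> carrier (presented_group X R)"
  then show "\<one>\<^bsub>presented_group X R\<^esub> \<otimes>\<^bsub>presented_group X R\<^esub> x = x"
    by (auto simp: presented_group_carrier presented_group_one presented_group_mult)
next
  fix x
  assume "x \<in> carrier (presented_group X R)"
  then obtain w where w: "x = pres_class X R w" "set w \<subseteq> X \<times> UNIV"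
    by (auto simp: presented_group_carrier)
  then show "\<exists>y\<in>carrier (presented_group X R). y \<otimes>\<^bsub>presented_group X R\<^esub> x = \<one>\<^bsub>presented_group X R\<^esub>"
    by (intro bexI[of _ "pres_class X R (word_inv w)"])
       (auto simp: presented_group_mult presented_group_one pres_class_eq_iff
             pres_rel_word_inv_left intro!: pres_class_in_carrier word_inv_alphabet)
qed

lemma presented_group_inv:
  assumes "set w \<subseteq> X \<times> UNIV"
  shows "inv\<^bsub>presented_group X R\<^esub> (pres_class X R w) = pres_class X R (word_inv w)"
proof -
  interpret group "presented_group X R" by (rule group_presented_group)
  show ?thesis
    using assms
    by (intro inv_equality)
       (auto simp: presented_group_mult presented_group_one pres_class_eq_iff
             pres_rel_word_inv_left intro!: pres_class_in_carrier word_inv_alphabet)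
qed

lemma pres_rel_eq_relator:
  assumes "eq_relator p q \<in> R" "set q \<subseteq> X \<times> UNIV"
  shows "pres_rel X R p q"
proof -
  have "pres_rel X R (p @ []) (p @ word_inv q @ q)"
    using pres_rel_append_cong[OF pres_rel_word_inv_left[OF assms(2)], where p=p and q="[]"]
    by (simp add: pres_rel.pr_sym)
  moreover have "pres_rel X R ([] @ (p @ word_inv q) @ q) ([] @ q)"
    using assms(1) unfolding eq_relator_def by (rule pres_rel.pr_relator)
  ultimately show ?thesis by (auto intro: pres_rel.pr_trans)
qed

lemma pres_rel_alphabet_iff:
  assumes "pres_rel X R u v" "\<And>r. r \<in> R \<Longrightarrow> set r \<subseteq> X \<times> UNIV"
  shows "set u \<subseteq> X \<times> UNIV \<longleftrightarrow> set v \<subseteq> X \<times> UNIV"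
  using assms by induction auto

lemma presented_group_some_word:
  assumes "C \<in> carrier (presented_group X R)" "\<And>r. r \<in> R \<Longrightarrow> set r \<subseteq> X \<times> UNIV"
  shows "(SOME w. w \<in> C) \<in> C" "set (SOME w. w \<in> C) \<subseteq> X \<times> UNIV"
proof -
  obtain w where w: "C = pres_class X R w" "set w \<subseteq> X \<times> UNIV"
    using assms(1) by (auto simp: presented_group_carrier)
  then show "(SOME w. w \<in> C) \<in> C"
    using some_in_pres_class[of X R w] by (simp add: pres_class_def)
  with w show "set (SOME w. w \<in> C) \<subseteq> X \<times> UNIV"
    using pres_rel_alphabet_iff[OF _ assms(2)] by (auto simp: pres_class_def)
qed

definition map_letters :: "('a \<Rightarrow> 'b) \<Rightarrow> ('a \<times> bool) list \<Rightarrow> ('b \<times> bool) list" where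
  "map_letters f w = map (\<lambda>(a, b). (f a, b)) w"

lemma map_letters_append [simp]: "map_letters f (u @ v) = map_letters f u @ map_letters f v"
  by (simp add: map_letters_def)

lemma map_letters_id [simp]: "map_letters id w = w"
  by (induction w) (auto simp: map_letters_def)

lemma map_letters_word_inv: "map_letters f (word_inv w) = word_inv (map_letters f w)"
  by (simp add: map_letters_def word_inv_def rev_map case_prod_beta)

lemma map_letters_pos_word: "map_letters f (pos_word xs) = pos_word (map f xs)"
  by (simp add: map_letters_def pos_word_def)

lemma pres_rel_map_letters:
  assumes f: "f ` X \<subseteq> Y" and rel: "\<And>r. r \<in> R \<Longrightarrow> pres_rel Y R' (map_letters f r) []"
  shows "pres_rel X R u v \<Longrightarrow> pres_rel Y R' (map_letters f u) (map_letters f v)"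
proof (induction rule: pres_rel.induct)
  case (pr_refl w)
  then show ?case by (rule pres_rel.pr_refl)
next
  case (pr_sym u v)
  then show ?case by (blast intro: pres_rel.pr_sym)
next
  case (pr_trans u v w)
  then show ?case by (blast intro: pres_rel.pr_trans)
next
  case (pr_cancel a u b v)
  then have "pres_rel Y R' (map_letters f u @ [(f a, b), (f a, \<not> b)] @ map_letters f v)
      (map_letters f u @ map_letters f v)"
    using f by (intro pres_rel.pr_cancel) auto
  then show ?case by (simp add: map_letters_def)
next
  case (pr_relator r u v)
  then show ?case
    using pres_rel_append_cong[OF rel, of r "map_letters f u" "map_letters f v"] by simp
qed

lemma induced_hom:
  assumes f: "f ` X \<subseteq> Y" and rel: "\<And>r. r \<in> R \<Longrightarrow> pres_rel Y R' (map_letters f r) []"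
  defines "F \<equiv> \<lambda>C. pres_class Y R' (map_letters f (SOME w. w \<in> C))"
  shows induced_hom_class: "F (pres_class X R u) = pres_class Y R' (map_letters f u)"
    and induced_hom_hom: "F \<in> hom (presented_group X R) (presented_group Y R')"
proof -
  show val: "F (pres_class X R u) = pres_class Y R' (map_letters f u)" for u
    using pres_rel_map_letters[OF f rel some_in_pres_class[of X R u]]
    by (simp add: F_def pres_class_eq_iff pres_rel.pr_sym)
  show "F \<in> hom (presented_group X R) (presented_group Y R')"
  proof (rule homI)
    fix x
    assume "x \<in> carrier (presented_group X R)"
    then obtain u where "x = pres_class X R u" "set u \<subseteq> X \<times> UNIV"
      by (auto simp: presented_group_carrier)
    moreover from this f have "set (map_letters f u) \<subseteq> Y \<times> UNIV"
      by (fastforce simp: map_letters_def)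
    ultimately show "F x \<in> carrier (presented_group Y R')"
      by (simp add: val pres_class_in_carrier)
  next
    fix x y
    assume "x \<in> carrier (presented_group X R)" "y \<in> carrier (presented_group X R)"
    then show "F (x \<otimes>\<^bsub>presented_group X R\<^esub> y) = F x \<otimes>\<^bsub>presented_group Y R'\<^esub> F y"
      by (auto simp: presented_group_carrier val presented_group_mult)
  qed
qed

definition list_prod :: "('a, 'b) monoid_scheme \<Rightarrow> 'a list \<Rightarrow> 'a" where
  "list_prod G xs = foldr (\<lambda>x y. x \<otimes>\<^bsub>G\<^esub> y) xs \<one>\<^bsub>G\<^esub>"

lemma list_prod_Nil [simp]: "list_prod G [] = \<one>\<^bsub>G\<^esub>"
  by (simp add: list_prod_def)

lemma list_prod_Cons [simp]: "list_prod G (x # xs) = x \<otimes>\<^bsub>G\<^esub> list_prod G xs"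
  by (simp add: list_prod_def)

lemma (in monoid) list_prod_closed: "set xs \<subseteq> carrier G \<Longrightarrow> list_prod G xs \<in> carrier G"
  by (induction xs) auto

lemma (in monoid) list_prod_append:
  "set xs \<subseteq> carrier G \<Longrightarrow> set ys \<subseteq> carrier G \<Longrightarrow> list_prod G (xs @ ys) = list_prod G xs \<otimes> list_prod G ys"
  by (induction xs) (auto simp: m_assoc list_prod_closed)

lemma (in monoid) list_prod_update_pair:
  assumes i: "i + 1 < length xs" and xs: "set xs \<subseteq> carrier G" and xy: "x \<in> carrier G" "y \<in> carrier G"
    and prod: "x \<otimes> y = xs ! i \<otimes> xs ! (i + 1)"
  shows "list_prod G (xs[i := x, i + 1 := y]) = list_prod G xs"
proof -
  let ?P = "take i xs" and ?Q = "drop (i + 2) xs"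
  have split: "xs = ?P @ [xs ! i, xs ! (i + 1)] @ ?Q"
    using i by (simp add: Cons_nth_drop_Suc)
  have upd: "xs[i := x, i + 1 := y] = ?P @ [x, y] @ ?Q"
    using i by (subst split) (simp add: list_update_append nth_append min_def)
  have PQ: "set ?P \<subseteq> carrier G" "set ?Q \<subseteq> carrier G"
    using xs by (auto dest: in_set_takeD in_set_dropD)
  have ab: "xs ! i \<in> carrier G" "xs ! (i + 1) \<in> carrier G" using xs i by auto
  have "list_prod G (xs[i := x, i + 1 := y]) = list_prod G ?P \<otimes> ((x \<otimes> y) \<otimes> list_prod G ?Q)"
    unfolding upd using PQ xy by (simp add: list_prod_append list_prod_closed m_assoc)
  also have "\<dots> = list_prod G ?P \<otimes> ((xs ! i \<otimes> xs ! (i + 1)) \<otimes> list_prod G ?Q)"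
    by (simp add: prod)
  also have "\<dots> = list_prod G xs"
    by (subst (3) split) (use PQ ab in \<open>simp add: list_prod_append list_prod_closed m_assoc\<close>)
  finally show ?thesis .
qed

lemma pres_class_pos_word:
  "pres_class X R (pos_word xs) = list_prod (presented_group X R) (map (pres_gen X R) xs)"
proof (induction xs)
  case Nil
  then show ?case by (simp add: pos_word_def presented_group_one)
next
  case (Cons a xs)
  have "pres_class X R (pos_word (a # xs)) = pres_gen X R a \<otimes>\<^bsub>presented_group X R\<^esub> pres_class X R (pos_word xs)"
    by (simp add: presented_group_mult pos_word_def pres_gen_def)
  then show ?case using Cons by simp
qed

lemma (in monoid) list_prod_alternating_Suc:
  assumes "x \<in> carrier G" "y \<in> carrier G"
  shows "list_prod G (map (\<lambda>l. if even l then x else y) [0..<Suc m]) =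
         list_prod G (map (\<lambda>l. if even l then x else y) [0..<m]) \<otimes> (if even m then x else y)"
proof -
  have "set (map (\<lambda>l. if even l then x else y) [0..<m]) \<subseteq> carrier G"
    using assms by auto
  then show ?thesis using assms by (simp add: list_prod_append)
qed

lemma (in monoid) list_prod_alternating_even:
  assumes "x \<in> carrier G" "y \<in> carrier G"
  shows "list_prod G (map (\<lambda>l. if even l then x else y) [0..<2 * p]) = (x \<otimes> y) [^] p"
proof (induction p)
  case 0
  then show ?case by simp
next
  case (Suc p)
  have "2 * Suc p = Suc (Suc (2 * p))" by simp
  then show ?case
    using assms Suc by (simp only: list_prod_alternating_Suc[OF assms]) (simp add: m_assoc)
qed

lemma (in monoid) list_prod_alternating_odd:
  assumes "x \<in> carrier G" "y \<in> carrier G"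
  shows "list_prod G (map (\<lambda>l. if even l then x else y) [0..<Suc (2 * p)]) = (x \<otimes> y) [^] p \<otimes> x"
  using list_prod_alternating_Suc[OF assms, of "2 * p"] list_prod_alternating_even[OF assms, of p]
  by simp

lemma (in group) inv_mult_cancel_left:
  "x \<in> carrier G \<Longrightarrow> y \<in> carrier G \<Longrightarrow> inv x \<otimes> (x \<otimes> y) = y"
  by (simp flip: m_assoc)

lemma (in group) mult_inv_cancel_left:
  "x \<in> carrier G \<Longrightarrow> y \<in> carrier G \<Longrightarrow> x \<otimes> (inv x \<otimes> y) = y"
  by (simp flip: m_assoc)

lemma (in group) nat_pow_conj:
  assumes "x \<in> carrier G" "g \<in> carrier G"
  shows "(g \<otimes> x \<otimes> inv g) [^] (p :: nat) = g \<otimes> x [^] p \<otimes> inv g"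
proof (induction p)
  case 0
  then show ?case using assms by simp
next
  case (Suc p)
  then show ?case using assms by (simp add: m_assoc inv_mult_cancel_left)
qed

lemma (in group) periodic_chain_shift:
  assumes g: "\<And>l. g l \<in> carrier G" and chain: "\<And>l. g l \<otimes> g (Suc l) = c"
  shows "g l \<otimes> c [^] (p :: nat) = c [^] p \<otimes> g (l + 2 * p)"
proof (induction p arbitrary: l)
  case 0
  then show ?case using g by simp
next
  case (Suc p)
  have c: "c \<in> carrier G" using g chain[of 0, symmetric] by simp
  have step: "g l \<otimes> c = c \<otimes> g (l + 2)" for l
  proof -
    have "g l \<otimes> c = (g l \<otimes> g (Suc l)) \<otimes> g (Suc (Suc l))"
      using g chain[of "Suc l", symmetric] by (simp add: m_assoc)
    then show ?thesis by (simp add: chain)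
  qed
  have "g l \<otimes> c [^] Suc p = (g l \<otimes> c) \<otimes> c [^] p"
    using g c nat_pow_Suc2[OF c, of p] by (simp add: m_assoc)
  also have "\<dots> = c \<otimes> (c [^] p \<otimes> g (l + 2 + 2 * p))"
    using g c by (simp add: step m_assoc Suc)
  also have "\<dots> = c [^] Suc p \<otimes> g (l + 2 * Suc p)"
    using g c nat_pow_Suc2[OF c, of p] by (simp add: m_assoc)
  finally show ?case .
qed

lemma (in group) periodic_chain_braid_relation:
  assumes g: "\<And>l. g l \<in> carrier G" and chain: "\<And>l. g l \<otimes> g (Suc l) = c"
    and period: "\<And>l. g (l + k) = g l"
  shows "list_prod G (map (\<lambda>l. if even l then g 0 else g 1) [0..<k]) =
         list_prod G (map (\<lambda>l. if even l then g 1 else g 0) [0..<k])"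
proof -
  have c: "c = g 0 \<otimes> g 1" using chain[of 0] by simp
  have "c \<in> carrier G" using g by (simp add: c)
  have swap: "(g 1 \<otimes> g 0) [^] p = g 1 \<otimes> c [^] p \<otimes> inv (g 1)" for p :: nat
  proof -
    have "g 1 \<otimes> g 0 = g 1 \<otimes> c \<otimes> inv (g 1)"
      using g by (simp add: c m_assoc)
    then show ?thesis using g \<open>c \<in> carrier G\<close> by (simp add: nat_pow_conj)
  qed
  consider p where "k = 2 * p" | p where "k = Suc (2 * p)"
    by (metis oddE evenE Suc_eq_plus1)
  then show ?thesis
  proof cases
    case 1
    have "g 1 \<otimes> c [^] p = c [^] p \<otimes> g 1"
      using periodic_chain_shift[of g c, OF g chain, of 1 p] period[of 1] by (simp add: 1 add.commute)
    then have "(g 1 \<otimes> g 0) [^] p = c [^] p"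
      using g \<open>c \<in> carrier G\<close> by (simp only: swap) (simp add: m_assoc)
    then show ?thesis
      unfolding 1 list_prod_alternating_even[OF g g] by (simp add: c)
  next
    case 2
    have "g 1 \<otimes> c [^] p = c [^] p \<otimes> g 0"
      using periodic_chain_shift[of g c, OF g chain, of 1 p] period[of 0] by (simp add: 2)
    then have "(g 1 \<otimes> g 0) [^] p \<otimes> g 1 = c [^] p \<otimes> g 0"
      using g \<open>c \<in> carrier G\<close> by (simp only: swap) (simp add: m_assoc)
    then show ?thesis
      unfolding 2 list_prod_alternating_odd[OF g g] by (simp add: c)
  qed
qed

lemma hurwitz_word_Nil [simp]: "hurwitz_word G [] gs = gs"
  by (simp add: hurwitz_word_def)

lemma hurwitz_word_Cons [simp]: "hurwitz_word G (x # w) gs = hurwitz_gen G x (hurwitz_word G w gs)"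
  by (simp add: hurwitz_word_def)

lemma length_hurwitz_gen [simp]: "length (hurwitz_gen G x gs) = length gs"
  by (simp add: hurwitz_gen_def split: prod.splits)

lemma length_hurwitz_word [simp]: "length (hurwitz_word G w gs) = length gs"
  by (induction w) auto

lemma (in group) hurwitz_gen_closed:
  assumes "set gs \<subseteq> carrier G" "i + 1 < length gs"
  shows "set (hurwitz_gen G (i, b) gs) \<subseteq> carrier G"
proof -
  have "gs ! i \<in> carrier G" "gs ! (i + 1) \<in> carrier G" using assms by auto
  then show ?thesis
    using assms(1) by (auto simp: hurwitz_gen_def dest!: set_update_subset_insert[THEN subsetD])
qed

lemma (in group) hurwitz_word_closed:
  assumes "set gs \<subseteq> carrier G" "set w \<subseteq> {..<length gs - 1} \<times> UNIV"
  shows "set (hurwitz_word G w gs) \<subseteq> carrier G"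
  using assms(2)
proof (induction w)
  case (Cons x w)
  then show ?case using hurwitz_gen_closed[of "hurwitz_word G w gs" "fst x" "snd x"]
    by (cases x) fastforce
qed (use assms(1) in simp)

lemma (in group_hom) hurwitz_word_hom:
  assumes gs: "set gs \<subseteq> carrier G" and w: "set w \<subseteq> {..<length gs - 1} \<times> UNIV"
  shows "map h (hurwitz_word G w gs) = hurwitz_word H w (map h gs)"
  using w
proof (induction w)
  case Nil
  then show ?case by simp
next
  case (Cons x w)
  obtain i b where x: "x = (i, b)" by fastforce
  let ?g = "hurwitz_word G w gs"
  have i: "i + 1 < length ?g" using Cons.prems x by auto
  have "set ?g \<subseteq> carrier G" using Cons.prems gs by (intro G.hurwitz_word_closed) auto
  then have "?g ! i \<in> carrier G" "?g ! (i + 1) \<in> carrier G" using i by auto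
  then have "map h (hurwitz_gen G (i, b) ?g) = hurwitz_gen H (i, b) (map h ?g)"
    using i by (simp add: hurwitz_gen_def map_update)
  with Cons show ?case by (simp add: x)
qed

lemma (in group) hurwitz_gen_eq_update:
  assumes i: "i + 1 < length gs" and gs: "set gs \<subseteq> carrier G" and xy: "x \<in> carrier G" "y \<in> carrier G"
    and prod: "x \<otimes> y = gs ! i \<otimes> gs ! (i + 1)"
    and kept: "if b then y = gs ! i else x = gs ! (i + 1)"
  shows "hurwitz_gen G (i, b) gs = gs[i := x, i + 1 := y]"
proof -
  have ab: "gs ! i \<in> carrier G" "gs ! (i + 1) \<in> carrier G" using i gs by auto
  show ?thesis
  proof (cases b)
    case True
    then have "x = gs ! i \<otimes> gs ! (i + 1) \<otimes> inv (gs ! i)"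
      using kept prod ab xy by (simp add: inv_solve_right)
    with True kept show ?thesis by (simp add: hurwitz_gen_def)
  next
    case False
    then have "y = inv (gs ! (i + 1)) \<otimes> gs ! i \<otimes> gs ! (i + 1)"
      using kept prod ab xy by (simp add: inv_solve_left m_assoc)
    with False kept show ?thesis by (simp add: hurwitz_gen_def)
  qed
qed

lemma braid_group_some_word:
  assumes "\<beta> \<in> carrier (braid_group n)"
  shows "set (SOME w. w \<in> \<beta>) \<subseteq> {..<n - 1} \<times> UNIV"
  using assms unfolding braid_group_def
  by (rule presented_group_some_word)
     (auto simp: braid_relators_def eq_relator_def pos_word_def word_inv_def)

section \<open>Coxeter groups and reflection length\<close>

locale coxeter_system =
  fixes n :: nat and M :: "nat \<Rightarrow> nat \<Rightarrow> enat"
  assumes coxeter_matrix: "coxeter_matrix n M"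
begin

abbreviation "W \<equiv> coxeter_group n M"
abbreviation "RW \<equiv> coxeter_relators n M"
abbreviation "s \<equiv> cox_gen n M"
abbreviation "T \<equiv> cox_T n M"
abbreviation "len_T \<equiv> refl_length n M"
abbreviation "h \<equiv> cox_elem n M"

lemma coxeter_group_eq: "W = presented_group {..<n} RW"
  by (simp add: coxeter_group_def)

sublocale W: group W
  by (simp add: coxeter_group_eq group_presented_group)

lemma M_diag: "i < n \<Longrightarrow> M i i = 1"
  using coxeter_matrix by (simp add: coxeter_matrix_def)

lemma M_sym: "i < n \<Longrightarrow> j < n \<Longrightarrow> M i j = M j i"
  using coxeter_matrix by (simp add: coxeter_matrix_def)

lemma M_off_diag:
  assumes "i < n" "j < n" "i \<noteq> j" "M i j = enat k"
  shows "2 \<le> k"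
proof -
  have "2 \<le> M i j" using coxeter_matrix assms(1-3) unfolding coxeter_matrix_def by blast
  then show ?thesis using assms(4) by (simp add: numeral_eq_enat)
qed

lemma class_mult: "pres_class {..<n} RW u \<otimes>\<^bsub>W\<^esub> pres_class {..<n} RW v = pres_class {..<n} RW (u @ v)"
  by (simp add: coxeter_group_eq presented_group_mult)

lemma class_Nil: "pres_class {..<n} RW [] = \<one>\<^bsub>W\<^esub>"
  by (simp add: coxeter_group_eq presented_group_one)

lemma gen_eq_class: "s i = pres_class {..<n} RW [(i, True)]"
  by (simp add: cox_gen_def pres_gen_def)

lemma gen_in_carrier [simp]: "i < n \<Longrightarrow> s i \<in> carrier W"
  by (simp add: gen_eq_class coxeter_group_eq pres_class_in_carrier)

lemma gen_square: "i < n \<Longrightarrow> s i \<otimes>\<^bsub>W\<^esub> s i = \<one>\<^bsub>W\<^esub>"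
proof -
  assume i: "i < n"
  have "M i i = enat 1" using M_diag[OF i] by (simp add: one_enat_def)
  then have "concat (replicate 1 [(i, True), (i, True)]) \<in> RW"
    unfolding coxeter_relators_def using i by blast
  then have "pres_rel {..<n} RW [(i, True), (i, True)] []"
    using pres_rel_relator_trivial by simp
  then show ?thesis
    by (simp add: gen_eq_class class_mult pres_class_eq_iff flip: class_Nil)
qed

lemma gen_inv: "i < n \<Longrightarrow> inv\<^bsub>W\<^esub> s i = s i"
  by (rule W.inv_equality) (auto simp: gen_square)

lemma letter_class: "i < n \<Longrightarrow> pres_class {..<n} RW [(i, b)] = s i"
proof (cases b)
  case False
  assume i: "i < n"
  then have "pres_class {..<n} RW [(i, False)] = inv\<^bsub>W\<^esub> s i"
    by (simp add: gen_eq_class coxeter_group_eq presented_group_inv word_inv_def)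
  with False i show ?thesis by (simp add: gen_inv)
qed (simp add: gen_eq_class)

lemma class_eq_list_prod_gens:
  "set w \<subseteq> {..<n} \<times> UNIV \<Longrightarrow> pres_class {..<n} RW w = list_prod W (map s (map fst w))"
proof (induction w)
  case Nil
  then show ?case by (simp add: class_Nil)
next
  case (Cons x w)
  then have "pres_class {..<n} RW (x # w) = s (fst x) \<otimes>\<^bsub>W\<^esub> pres_class {..<n} RW w"
    using letter_class[of "fst x" "snd x"] class_mult[of "[x]" w] by auto
  with Cons show ?case by simp
qed

lemma cox_prod_eq_list_prod: "cox_prod n M = list_prod W"
  by (simp add: fun_eq_iff cox_prod_def list_prod_def)

lemma h_eq: "h = list_prod W (map s [0..<n])"
  by (simp add: cox_elem_def cox_prod_eq_list_prod)

lemma h_in_carrier: "h \<in> carrier W"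
  by (auto simp: h_eq intro!: W.list_prod_closed)

lemma reflection_in_carrier: "t \<in> T \<Longrightarrow> t \<in> carrier W"
  unfolding cox_T_def cox_S_def by auto

lemma reflections_in_carrier: "set ts \<subseteq> T \<Longrightarrow> set ts \<subseteq> carrier W"
  using reflection_in_carrier by blast

lemma gen_reflection: "i < n \<Longrightarrow> s i \<in> T"
  unfolding cox_T_def cox_S_def
  by (rule CollectI, rule exI[of _ "\<one>\<^bsub>W\<^esub>"], rule exI[of _ "s i"]) simp

lemma reflection_conj: "t \<in> T \<Longrightarrow> g \<in> carrier W \<Longrightarrow> g \<otimes>\<^bsub>W\<^esub> t \<otimes>\<^bsub>W\<^esub> inv\<^bsub>W\<^esub> g \<in> T"
proof -
  assume "t \<in> T" and g: "g \<in> carrier W"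
  then obtain g' r where g': "g' \<in> carrier W" "r \<in> cox_S n M" "t = g' \<otimes>\<^bsub>W\<^esub> r \<otimes>\<^bsub>W\<^esub> inv\<^bsub>W\<^esub> g'"
    unfolding cox_T_def by auto
  have "r \<in> carrier W" using g'(2) unfolding cox_S_def by auto
  then have "g \<otimes>\<^bsub>W\<^esub> t \<otimes>\<^bsub>W\<^esub> inv\<^bsub>W\<^esub> g = (g \<otimes>\<^bsub>W\<^esub> g') \<otimes>\<^bsub>W\<^esub> r \<otimes>\<^bsub>W\<^esub> inv\<^bsub>W\<^esub> (g \<otimes>\<^bsub>W\<^esub> g')"
    using g g' by (simp add: W.m_assoc W.inv_mult_group)
  then show ?thesis using g g' unfolding cox_T_def by blast
qed

lemma reflection_square: "t \<in> T \<Longrightarrow> t \<otimes>\<^bsub>W\<^esub> t = \<one>\<^bsub>W\<^esub>"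
proof -
  assume "t \<in> T"
  then obtain g i where g: "g \<in> carrier W" "i < n" "t = g \<otimes>\<^bsub>W\<^esub> s i \<otimes>\<^bsub>W\<^esub> inv\<^bsub>W\<^esub> g"
    unfolding cox_T_def cox_S_def by auto
  then have "t \<otimes>\<^bsub>W\<^esub> t = g \<otimes>\<^bsub>W\<^esub> (s i \<otimes>\<^bsub>W\<^esub> s i) \<otimes>\<^bsub>W\<^esub> inv\<^bsub>W\<^esub> g"
    by (simp add: W.m_assoc W.inv_mult_cancel_left)
  then show ?thesis using g by (simp add: gen_square)
qed

lemma reflection_inv: "t \<in> T \<Longrightarrow> inv\<^bsub>W\<^esub> t = t"
  by (rule W.inv_equality) (auto simp: reflection_square reflection_in_carrier)

lemma reflection_conj_reflection: "t \<in> T \<Longrightarrow> a \<in> T \<Longrightarrow> a \<otimes>\<^bsub>W\<^esub> t \<otimes>\<^bsub>W\<^esub> a \<in> T"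
  using reflection_conj[of t a] by (simp add: reflection_inv reflection_in_carrier)

lemma reflection_cancel_left [simp]: "t \<in> T \<Longrightarrow> y \<in> carrier W \<Longrightarrow> t \<otimes>\<^bsub>W\<^esub> (t \<otimes>\<^bsub>W\<^esub> y) = y"
  using reflection_in_carrier reflection_square by (simp flip: W.m_assoc)

lemma carrier_reflection_factorization:
  assumes "x \<in> carrier W"
  obtains ts where "set ts \<subseteq> T" "list_prod W ts = x"
proof -
  obtain w where w: "x = pres_class {..<n} RW w" "set w \<subseteq> {..<n} \<times> UNIV"
    using assms by (auto simp: coxeter_group_eq presented_group_carrier)
  then have "set (map s (map fst w)) \<subseteq> T" using gen_reflection by auto
  with w that show ?thesis using class_eq_list_prod_gens by blast
qed

lemma len_T_le: "set ts \<subseteq> T \<Longrightarrow> list_prod W ts = a \<Longrightarrow> len_T a \<le> length ts"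
  unfolding refl_length_def cox_prod_eq_list_prod by (rule Least_le) blast

lemma len_T_reflection_le: "t \<in> T \<Longrightarrow> len_T t \<le> 1"
  using len_T_le[of "[t]" t] reflection_in_carrier by simp

lemma len_T_reduced_factorization:
  assumes "a \<in> carrier W"
  obtains ts where "set ts \<subseteq> T" "length ts = len_T a" "list_prod W ts = a"
proof -
  obtain ts where "set ts \<subseteq> T" "list_prod W ts = a"
    using carrier_reflection_factorization[OF assms] .
  then have "\<exists>k ts. set ts \<subseteq> T \<and> length ts = k \<and> list_prod W ts = a" by blast
  then have "\<exists>ts. set ts \<subseteq> T \<and> length ts = len_T a \<and> list_prod W ts = a"
    unfolding refl_length_def cox_prod_eq_list_prod by (rule LeastI_ex)
  with that show ?thesis by blast
qed

lemma len_T_mult_le: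
  assumes a: "a \<in> carrier W" and b: "b \<in> carrier W"
  shows "len_T (a \<otimes>\<^bsub>W\<^esub> b) \<le> len_T a + len_T b"
proof -
  obtain xs where xs: "set xs \<subseteq> T" "length xs = len_T a" "list_prod W xs = a"
    using len_T_reduced_factorization[OF a] .
  obtain ys where ys: "set ys \<subseteq> T" "length ys = len_T b" "list_prod W ys = b"
    using len_T_reduced_factorization[OF b] .
  have "list_prod W (xs @ ys) = a \<otimes>\<^bsub>W\<^esub> b"
    using xs ys by (simp add: W.list_prod_append reflections_in_carrier)
  then have "len_T (a \<otimes>\<^bsub>W\<^esub> b) \<le> length (xs @ ys)" using xs ys by (intro len_T_le) auto
  then show ?thesis using xs ys by simp
qed

definition move_to_front :: "(nat \<times> bool) list set list \<Rightarrow> nat \<Rightarrow> (nat \<times> bool) list set list" where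
  "move_to_front ts i = map (\<lambda>x. ts ! i \<otimes>\<^bsub>W\<^esub> x \<otimes>\<^bsub>W\<^esub> ts ! i) (take i ts) @ drop (Suc i) ts"

lemma list_prod_conj_reflection:
  assumes a: "a \<in> T" and ts: "set ts \<subseteq> carrier W"
  shows "list_prod W (map (\<lambda>x. a \<otimes>\<^bsub>W\<^esub> x \<otimes>\<^bsub>W\<^esub> a) ts) = a \<otimes>\<^bsub>W\<^esub> list_prod W ts \<otimes>\<^bsub>W\<^esub> a"
  using ts
proof (induction ts)
  case Nil
  then show ?case using a by (simp add: reflection_square reflection_in_carrier)
next
  case (Cons x ts)
  then have "x \<in> carrier W" "list_prod W ts \<in> carrier W"
    by (auto intro: W.list_prod_closed)
  with Cons a show ?case
    by (simp add: W.m_assoc reflection_in_carrier)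
qed

lemma move_to_front_reflections:
  "set ts \<subseteq> T \<Longrightarrow> i < length ts \<Longrightarrow> set (move_to_front ts i) \<subseteq> T"
  unfolding move_to_front_def
  by (auto dest: in_set_takeD in_set_dropD intro!: reflection_conj_reflection)

lemma length_move_to_front: "i < length ts \<Longrightarrow> length (move_to_front ts i) = length ts - 1"
  by (simp add: move_to_front_def)

lemma nth_move_to_front: "i < j \<Longrightarrow> j < length ts \<Longrightarrow> move_to_front ts i ! (j - 1) = ts ! j"
  by (auto simp: move_to_front_def nth_append)

lemma list_prod_move_to_front:
  assumes ts: "set ts \<subseteq> T" and i: "i < length ts"
  shows "list_prod W ts = ts ! i \<otimes>\<^bsub>W\<^esub> list_prod W (move_to_front ts i)"
proof -
  let ?a = "ts ! i" and ?P = "take i ts" and ?Q = "drop (Suc i) ts"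
  have a: "?a \<in> T" using ts i by auto
  have PQ: "set ?P \<subseteq> carrier W" "set ?Q \<subseteq> carrier W"
    using reflections_in_carrier[OF ts] by (auto dest: in_set_takeD in_set_dropD)
  then have PQ': "list_prod W ?P \<in> carrier W" "list_prod W ?Q \<in> carrier W"
    by (auto intro: W.list_prod_closed)
  have conj: "set (map (\<lambda>x. ?a \<otimes>\<^bsub>W\<^esub> x \<otimes>\<^bsub>W\<^esub> ?a) ?P) \<subseteq> carrier W"
    using PQ(1) a reflection_in_carrier by auto
  have "ts = ?P @ ?a # ?Q" using i by (simp add: id_take_nth_drop)
  then have "list_prod W ts = list_prod W ?P \<otimes>\<^bsub>W\<^esub> (?a \<otimes>\<^bsub>W\<^esub> list_prod W ?Q)"
    by (metis PQ W.list_prod_append a reflection_in_carrier insert_subset list.set(2) list_prod_Cons)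
  also have "\<dots> = ?a \<otimes>\<^bsub>W\<^esub> (?a \<otimes>\<^bsub>W\<^esub> list_prod W ?P \<otimes>\<^bsub>W\<^esub> ?a) \<otimes>\<^bsub>W\<^esub> list_prod W ?Q"
    using PQ' a reflection_in_carrier[OF a] by (simp add: W.m_assoc)
  also have "\<dots> = ?a \<otimes>\<^bsub>W\<^esub> list_prod W (move_to_front ts i)"
    using PQ PQ' conj a reflection_in_carrier[OF a]
    by (simp add: move_to_front_def list_prod_conj_reflection W.list_prod_append W.list_prod_closed W.m_assoc)
  finally show ?thesis .
qed

end

section \<open>A geometric representation and the reflection length of \<open>h\<close>\<close>

lemma sum_sin_full_period:
  fixes k :: nat and \<theta> \<phi> :: real
  assumes k: "real k * \<theta> = 2 * pi" and half: "sin (\<theta> / 2) \<noteq> 0"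
  shows "(\<Sum>l<k. sin (real l * \<theta> + \<phi>)) = 0"
proof -
  define g where "g l = cos (real l * \<theta> + \<phi> - \<theta> / 2)" for l :: nat
  have telescope: "2 * sin (\<theta> / 2) * sin (real l * \<theta> + \<phi>) = g l - g (Suc l)" for l
  proof -
    have "g (Suc l) = cos ((real l * \<theta> + \<phi>) + \<theta> / 2)"
      unfolding g_def by (simp add: algebra_simps)
    moreover have "g l = cos ((real l * \<theta> + \<phi>) - \<theta> / 2)"
      unfolding g_def by simp
    ultimately show ?thesis by (simp add: cos_diff cos_add)
  qed
  have "2 * sin (\<theta> / 2) * (\<Sum>l<k. sin (real l * \<theta> + \<phi>)) = (\<Sum>l<k. g l - g (Suc l))"
    by (simp add: sum_distrib_left telescope)
  also have "\<dots> = g 0 - g k" by (rule sum_lessThan_telescope')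
  also have "g k = g 0"
    unfolding g_def using k cos_periodic[of "\<phi> - \<theta> / 2"] by (simp add: algebra_simps)
  finally show ?thesis using half by simp
qed

lemma cos_recurrence_closed_form:
  fixes z :: "nat \<Rightarrow> real"
  assumes rec: "\<And>l. z (l + 2) = 2 * cos \<theta> * z (l + 1) - z l"
  shows "z l * sin \<theta> = z 1 * sin (real l * \<theta>) - z 0 * sin ((real l - 1) * \<theta>)"
proof -
  have sin_rec: "sin (b * \<theta>) = 2 * cos \<theta> * sin (a * \<theta>) - sin (c * \<theta>)"
    if "b = a + 1" "c = a - 1" for a b c :: real
  proof -
    have "b * \<theta> = a * \<theta> + \<theta>" "c * \<theta> = a * \<theta> - \<theta>"
      unfolding that by (simp_all add: algebra_simps)
    then show ?thesis by (simp add: sin_add sin_diff)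
  qed
  have "z l * sin \<theta> = z 1 * sin (real l * \<theta>) - z 0 * sin ((real l - 1) * \<theta>) \<and>
        z (l + 1) * sin \<theta> = z 1 * sin ((real l + 1) * \<theta>) - z 0 * sin (real l * \<theta>)"
  proof (induction l)
    case 0
    then show ?case by simp
  next
    case (Suc l)
    then have e0: "z l * sin \<theta> = z 1 * sin (real l * \<theta>) - z 0 * sin ((real l - 1) * \<theta>)"
      and e1: "z (l + 1) * sin \<theta> = z 1 * sin ((real l + 1) * \<theta>) - z 0 * sin (real l * \<theta>)"
      by blast+
    have "z (l + 2) * sin \<theta> = 2 * cos \<theta> * (z (l + 1) * sin \<theta>) - z l * sin \<theta>"
      unfolding rec[of l] by (simp add: algebra_simps)
    also have "\<dots> = z 1 * (2 * cos \<theta> * sin ((real l + 1) * \<theta>) - sin (real l * \<theta>))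
        - z 0 * (2 * cos \<theta> * sin (real l * \<theta>) - sin ((real l - 1) * \<theta>))"
      unfolding e0 e1 by (simp add: algebra_simps)
    also have "\<dots> = z 1 * sin ((real l + 2) * \<theta>) - z 0 * sin ((real l + 1) * \<theta>)"
    proof -
      have r2: "sin ((real l + 2) * \<theta>) = 2 * cos \<theta> * sin ((real l + 1) * \<theta>) - sin (real l * \<theta>)"
        and r1: "sin ((real l + 1) * \<theta>) = 2 * cos \<theta> * sin (real l * \<theta>) - sin ((real l - 1) * \<theta>)"
        by (rule sin_rec; simp)+
      show ?thesis unfolding r2 r1 by (simp add: algebra_simps)
    qed
    finally show ?case using e1 by (simp add: add.commute)
  qed
  then show ?thesis by blast
qed

lemma cos_recurrence_sum_period:
  fixes z :: "nat \<Rightarrow> real" and k :: nat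
  assumes k: "k \<ge> 3" and rec: "\<And>l. z (l + 2) = 2 * cos (2 * pi / real k) * z (l + 1) - z l"
  shows "(\<Sum>l<k. z l) = 0"
proof -
  define \<theta> where "\<theta> = 2 * pi / real k"
  have k\<theta>: "real k * \<theta> = 2 * pi" using k by (simp add: \<theta>_def)
  have "0 < \<theta>" "\<theta> < pi" using k pi_gt_zero by (simp_all add: \<theta>_def field_simps)
  then have sin\<theta>: "sin \<theta> \<noteq> 0" and half: "sin (\<theta> / 2) \<noteq> 0"
    using sin_gt_zero[of \<theta>] sin_gt_zero[of "\<theta> / 2"] by auto
  have closed: "z l * sin \<theta> = z 1 * sin (real l * \<theta>) - z 0 * sin ((real l - 1) * \<theta>)" for l
    by (rule cos_recurrence_closed_form) (use rec in \<open>simp add: \<theta>_def\<close>)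
  have "(\<Sum>l<k. z l) * sin \<theta> = (\<Sum>l<k. z l * sin \<theta>)"
    by (simp add: sum_distrib_right)
  also have "\<dots> = (\<Sum>l<k. z 1 * sin (real l * \<theta> + 0) - z 0 * sin (real l * \<theta> + - \<theta>))"
    by (intro sum.cong refl) (subst closed, simp add: algebra_simps)
  also have "\<dots> = 0"
    using sum_sin_full_period[OF k\<theta> half, of 0] sum_sin_full_period[OF k\<theta> half, of "- \<theta>"]
    by (simp add: sum_subtractf flip: sum_distrib_left)
  finally show ?thesis using sin\<theta> by simp
qed

text \<open>How the pair \<open>(coroot i v, coroot j v)\<close> changes when \<open>simple_refl i \<circ> simple_refl j\<close>
  is applied to \<open>v\<close>, where \<open>a = cartan i j = cartan j i\<close> (see \<open>refl_pair_action\<close> below).\<close>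

definition dihedral_coroot_step :: "real \<Rightarrow> real \<times> real \<Rightarrow> real \<times> real" where
  "dihedral_coroot_step a p = (- fst p + a * snd p, - a * fst p + (a * a - 1) * snd p)"

lemma dihedral_coroot_step_recurrence:
  "fst ((dihedral_coroot_step a ^^ (l + 2)) p) =
     (a * a - 2) * fst ((dihedral_coroot_step a ^^ (l + 1)) p) - fst ((dihedral_coroot_step a ^^ l) p)
   \<and> snd ((dihedral_coroot_step a ^^ (l + 2)) p) =
     (a * a - 2) * snd ((dihedral_coroot_step a ^^ (l + 1)) p) - snd ((dihedral_coroot_step a ^^ l) p)"
proof -
  obtain x y where "(dihedral_coroot_step a ^^ l) p = (x, y)" by fastforce
  then show ?thesis by (simp add: numeral_2_eq_2 dihedral_coroot_step_def algebra_simps)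
qed

lemma dihedral_coroot_step_sum_period:
  assumes k: "k \<ge> 2"
  defines "a \<equiv> - 2 * cos (pi / real k)"
  shows "(\<Sum>q<k. fst ((dihedral_coroot_step a ^^ q) p)) = 0 \<and>
         (\<Sum>q<k. snd ((dihedral_coroot_step a ^^ q) p)) = 0"
proof (cases "k = 2")
  case True
  then have "a = 0" by (simp add: a_def)
  with True show ?thesis by (simp add: numeral_2_eq_2 dihedral_coroot_step_def)
next
  case False
  then have k3: "k \<ge> 3" using k by simp
  have "a * a - 2 = 2 * cos (2 * pi / real k)"
    using cos_double_cos[of "pi / real k"] by (simp add: a_def power2_eq_square algebra_simps)
  then show ?thesis
    using cos_recurrence_sum_period[OF k3, of "\<lambda>q. fst ((dihedral_coroot_step a ^^ q) p)"]
          cos_recurrence_sum_period[OF k3, of "\<lambda>q. snd ((dihedral_coroot_step a ^^ q) p)"]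
          dihedral_coroot_step_recurrence[where a=a] by simp
qed

definition scale_fun :: "real \<Rightarrow> (nat \<Rightarrow> real) \<Rightarrow> (nat \<Rightarrow> real)" where
  "scale_fun r v = (\<lambda>m. r * v m)"

interpretation V: vector_space scale_fun
  by unfold_locales (auto simp: scale_fun_def fun_eq_iff algebra_simps)

definition unit_vec :: "nat \<Rightarrow> nat \<Rightarrow> real" where
  "unit_vec i = (\<lambda>m. if m = i then 1 else 0)"

context coxeter_system
begin

text \<open>The reflection representation on sequences: \<open>simple_refl i\<close> fixes the hyperplane
  \<open>coroot i = 0\<close> and negates the root \<open>unit_vec i\<close>.  Off the diagonal the bilinear form is
  \<open>-2 cos (\<pi> / m\<^sub>i\<^sub>j)\<close>
  (for \<open>m\<^sub>i\<^sub>j = \<infinity>\<close> any value works, since no relation has to hold); the extra coordinates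
  \<open>n + i\<close> make the coroots independent even when that form is degenerate.\<close>

definition cartan :: "nat \<Rightarrow> nat \<Rightarrow> real" where
  "cartan i j = (if i = j then 2 else (case M i j of enat k \<Rightarrow> - 2 * cos (pi / real k) | \<infinity> \<Rightarrow> 0))"

definition coroot :: "nat \<Rightarrow> (nat \<Rightarrow> real) \<Rightarrow> real" where
  "coroot i v = (\<Sum>j<n. cartan i j * v j) + v (n + i)"

definition simple_refl :: "nat \<Rightarrow> (nat \<Rightarrow> real) \<Rightarrow> (nat \<Rightarrow> real)" where
  "simple_refl i v = (\<lambda>m. v m - coroot i v * unit_vec i m)"

definition word_action :: "(nat \<times> bool) list \<Rightarrow> (nat \<Rightarrow> real) \<Rightarrow> (nat \<Rightarrow> real)" where
  "word_action w = foldr (\<lambda>x f. simple_refl (fst x) \<circ> f) w id"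

definition geom_rep :: "(nat \<times> bool) list set \<Rightarrow> (nat \<Rightarrow> real) \<Rightarrow> (nat \<Rightarrow> real)" where
  "geom_rep C = word_action (SOME w. w \<in> C)"

lemma word_action_Nil [simp]: "word_action [] = id"
  by (simp add: word_action_def)

lemma word_action_Cons [simp]: "word_action (x # w) = simple_refl (fst x) \<circ> word_action w"
  by (simp add: word_action_def)

lemma word_action_append: "word_action (u @ v) = word_action u \<circ> word_action v"
  by (induction u) auto

lemma coroot_diff [simp]: "coroot i (\<lambda>m. v m - c * u m) = coroot i v - c * coroot i u"
  by (simp add: coroot_def sum_subtractf sum_distrib_left algebra_simps)

lemma simple_refl_diff [simp]:
  "simple_refl i (\<lambda>m. v m - c * u m) = (\<lambda>m. simple_refl i v m - c * simple_refl i u m)"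
  by (simp add: simple_refl_def fun_eq_iff algebra_simps)

lemma word_action_diff:
  "word_action w (\<lambda>m. v m - c * u m) = (\<lambda>m. word_action w v m - c * word_action w u m)"
  by (induction w) auto

lemma cartan_diag [simp]: "cartan i i = 2"
  by (simp add: cartan_def)

lemma coroot_unit_vec: "j < n \<Longrightarrow> coroot i (unit_vec j) = cartan i j"
proof -
  assume j: "j < n"
  have "(\<Sum>q<n. cartan i q * unit_vec j q) = (\<Sum>q\<in>{j}. cartan i q * unit_vec j q)"
    by (rule sum.mono_neutral_right) (auto simp: unit_vec_def j)
  then show ?thesis using j by (simp add: coroot_def unit_vec_def)
qed

lemma coroot_unit_vec_extra: "i < n \<Longrightarrow> coroot i (unit_vec (n + l)) = (if i = l then 1 else 0)"
  by (simp add: coroot_def unit_vec_def)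

lemma coroot_simple_refl: "j < n \<Longrightarrow> coroot i (simple_refl j v) = coroot i v - cartan i j * coroot j v"
  by (simp add: simple_refl_def coroot_unit_vec)

lemma simple_refl_involutive: "i < n \<Longrightarrow> simple_refl i (simple_refl i v) = v"
  by (simp add: simple_refl_def [of i "simple_refl i v"] coroot_simple_refl)
     (simp add: simple_refl_def fun_eq_iff)

lemma simple_refl_other_coord: "m \<noteq> i \<Longrightarrow> simple_refl i v m = v m"
  by (simp add: simple_refl_def unit_vec_def)

context
  fixes i j a
  assumes ij: "i < n" "j < n" "i \<noteq> j" and a: "cartan i j = a" "cartan j i = a"
begin

lemma refl_pair_action:
  "(simple_refl i \<circ> simple_refl j) v =
     (\<lambda>m. v m - coroot j v * unit_vec j m - (coroot i v - a * coroot j v) * unit_vec i m)"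
  "coroot i ((simple_refl i \<circ> simple_refl j) v) = - coroot i v + a * coroot j v"
  "coroot j ((simple_refl i \<circ> simple_refl j) v) = - a * coroot i v + (a * a - 1) * coroot j v"
proof -
  have ci: "coroot i (simple_refl j v) = coroot i v - a * coroot j v"
    using ij a by (simp add: coroot_simple_refl)
  show "(simple_refl i \<circ> simple_refl j) v =
     (\<lambda>m. v m - coroot j v * unit_vec j m - (coroot i v - a * coroot j v) * unit_vec i m)"
    by (simp add: simple_refl_def[of i] ci) (simp add: simple_refl_def)
  show "coroot i ((simple_refl i \<circ> simple_refl j) v) = - coroot i v + a * coroot j v"
    using ij by (simp add: coroot_simple_refl ci algebra_simps)
  show "coroot j ((simple_refl i \<circ> simple_refl j) v) = - a * coroot i v + (a * a - 1) * coroot j v"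
    using ij a by (simp add: coroot_simple_refl ci algebra_simps)
qed

lemma refl_pair_power_action:
  fixes v :: "nat \<Rightarrow> real" and l :: nat
  defines "P \<equiv> \<lambda>q. (dihedral_coroot_step a ^^ q) (coroot i v, coroot j v)"
  shows "((simple_refl i \<circ> simple_refl j) ^^ l) v =
           (\<lambda>m. v m - (\<Sum>q<l. snd (P q)) * unit_vec j m - (\<Sum>q<l. fst (P q) - a * snd (P q)) * unit_vec i m)
         \<and> coroot i (((simple_refl i \<circ> simple_refl j) ^^ l) v) = fst (P l)
         \<and> coroot j (((simple_refl i \<circ> simple_refl j) ^^ l) v) = snd (P l)"
proof (induction l)
  case 0
  then show ?case by (simp add: P_def)
next
  case (Suc l)
  define u where "u = ((simple_refl i \<circ> simple_refl j) ^^ l) v"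
  have IH: "u = (\<lambda>m. v m - (\<Sum>q<l. snd (P q)) * unit_vec j m - (\<Sum>q<l. fst (P q) - a * snd (P q)) * unit_vec i m)"
    "coroot i u = fst (P l)" "coroot j u = snd (P l)"
    using Suc.IH unfolding u_def by blast+
  have IH_pointwise:
    "u m = v m - (\<Sum>q<l. snd (P q)) * unit_vec j m - (\<Sum>q<l. fst (P q) - a * snd (P q)) * unit_vec i m" for m
    using fun_cong[OF IH(1), of m] by simp
  have P: "P (Suc l) = dihedral_coroot_step a (P l)" by (simp add: P_def)
  have step: "((simple_refl i \<circ> simple_refl j) ^^ Suc l) v = (simple_refl i \<circ> simple_refl j) u"
    unfolding u_def funpow.simps(2) by (rule comp_apply)
  note act = refl_pair_action[of u]
  show ?case
    unfolding step P
  proof (intro conjI)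
    show "(simple_refl i \<circ> simple_refl j) u = (\<lambda>m. v m - (\<Sum>q<Suc l. snd (P q)) * unit_vec j m
        - (\<Sum>q<Suc l. fst (P q) - a * snd (P q)) * unit_vec i m)"
      unfolding act(1) by (simp add: fun_eq_iff IH_pointwise IH(2,3) algebra_simps)
    show "coroot i ((simple_refl i \<circ> simple_refl j) u) = fst (dihedral_coroot_step a (P l))"
      unfolding act(2) by (simp add: IH(2,3) dihedral_coroot_step_def)
    show "coroot j ((simple_refl i \<circ> simple_refl j) u) = snd (dihedral_coroot_step a (P l))"
      unfolding act(3) by (simp add: IH(2,3) dihedral_coroot_step_def)
  qed
qed

lemma refl_pair_power_eq_id:
  assumes sums: "\<And>x y. (\<Sum>q<k. fst ((dihedral_coroot_step a ^^ q) (x, y))) = 0 \<and>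
                        (\<Sum>q<k. snd ((dihedral_coroot_step a ^^ q) (x, y))) = 0"
  shows "(simple_refl i \<circ> simple_refl j) ^^ k = id"
proof
  fix v
  show "((simple_refl i \<circ> simple_refl j) ^^ k) v = id v"
    using refl_pair_power_action[where v=v and l=k] sums[of "coroot i v" "coroot j v"]
    by (simp add: sum_subtractf flip: sum_distrib_left)
qed

end

lemma word_action_relator: "r \<in> RW \<Longrightarrow> word_action r = id"
proof -
  assume "r \<in> RW"
  then obtain i j k where r: "r = concat (replicate k [(i, True), (j, True)])" "i < n" "j < n" "M i j = enat k"
    unfolding coxeter_relators_def by blast
  have action: "word_action r = (simple_refl i \<circ> simple_refl j) ^^ k"
    unfolding r(1) by (induction k) (simp_all add: word_action_append o_def)
  show ?thesis
  proof (cases "i = j")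
    case True
    then have "k = 1" using r M_diag by (simp add: one_enat_def)
    then show ?thesis using action True r(2) by (auto simp: fun_eq_iff simple_refl_involutive)
  next
    case False
    have k2: "k \<ge> 2" using M_off_diag[OF r(2,3) False r(4)] .
    define a where "a = - 2 * cos (pi / real k)"
    have a: "cartan i j = a" "cartan j i = a"
      using False r M_sym by (auto simp: cartan_def a_def)
    have "(\<Sum>q<k. fst ((dihedral_coroot_step a ^^ q) (x, y))) = 0 \<and>
          (\<Sum>q<k. snd ((dihedral_coroot_step a ^^ q) (x, y))) = 0" for x y
      unfolding a_def by (rule dihedral_coroot_step_sum_period[OF k2])
    then show ?thesis using action refl_pair_power_eq_id[OF r(2,3) False a] by simp
  qed
qed

lemma word_action_pres_rel: "pres_rel {..<n} RW u v \<Longrightarrow> word_action u = word_action v"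
proof (induction rule: pres_rel.induct)
  case (pr_cancel a u b v)
  then show ?case by (auto simp: word_action_append fun_eq_iff simple_refl_involutive)
next
  case (pr_relator r u v)
  then show ?case by (simp add: word_action_append word_action_relator)
qed auto

lemma geom_rep_class: "geom_rep (pres_class {..<n} RW w) = word_action w"
  unfolding geom_rep_def by (rule word_action_pres_rel[OF some_in_pres_class, symmetric])

lemma geom_rep_mult:
  "x \<in> carrier W \<Longrightarrow> y \<in> carrier W \<Longrightarrow> geom_rep (x \<otimes>\<^bsub>W\<^esub> y) = geom_rep x \<circ> geom_rep y"
  by (auto simp: coxeter_group_eq presented_group_carrier presented_group_mult geom_rep_class word_action_append)

lemma geom_rep_one: "geom_rep \<one>\<^bsub>W\<^esub> = id"
  by (simp flip: class_Nil add: geom_rep_class)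

lemma geom_rep_reflection_rank_one: "t \<in> T \<Longrightarrow> \<exists>u. \<forall>v. geom_rep t v - v \<in> V.span {u}"
proof -
  assume "t \<in> T"
  then obtain g i where g: "g \<in> carrier W" "i < n" "t = g \<otimes>\<^bsub>W\<^esub> s i \<otimes>\<^bsub>W\<^esub> inv\<^bsub>W\<^esub> g"
    unfolding cox_T_def cox_S_def by auto
  obtain w where w: "g = pres_class {..<n} RW w" "set w \<subseteq> {..<n} \<times> UNIV"
    using g(1) by (auto simp: coxeter_group_eq presented_group_carrier)
  have "inv\<^bsub>W\<^esub> g = pres_class {..<n} RW (word_inv w)"
    using w by (simp add: coxeter_group_eq presented_group_inv)
  then have "t = pres_class {..<n} RW w \<otimes>\<^bsub>W\<^esub> pres_class {..<n} RW [(i, True)]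
      \<otimes>\<^bsub>W\<^esub> pres_class {..<n} RW (word_inv w)"
    using g(3) w(1) by (simp only: gen_eq_class)
  then have "t = pres_class {..<n} RW (w @ [(i, True)] @ word_inv w)"
    by (simp only: class_mult append_assoc)
  then have t: "geom_rep t = word_action w \<circ> simple_refl i \<circ> word_action (word_inv w)"
    by (simp add: geom_rep_class word_action_append comp_assoc)
  have inv: "word_action w (word_action (word_inv w) v) = v" for v
    using word_action_pres_rel[OF pres_rel_word_inv_right[OF w(2)]]
    by (simp add: word_action_append fun_eq_iff)
  show ?thesis
  proof (intro exI allI)
    fix v
    let ?x = "word_action (word_inv w) v"
    have "geom_rep t v = word_action w (\<lambda>m. ?x m - coroot i ?x * unit_vec i m)"
      by (simp add: t simple_refl_def)
    then have "geom_rep t v - v = scale_fun (- coroot i ?x) (word_action w (unit_vec i))"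
      by (simp add: word_action_diff inv scale_fun_def fun_eq_iff)
    then show "geom_rep t v - v \<in> V.span {word_action w (unit_vec i)}"
      by (metis V.span_base V.span_scale insertI1)
  qed
qed

lemma geom_rep_reflection_product:
  "set ts \<subseteq> T \<Longrightarrow> \<exists>us. length us = length ts \<and> (\<forall>v. geom_rep (list_prod W ts) v - v \<in> V.span (set us))"
proof (induction ts)
  case Nil
  have "geom_rep (list_prod W []) v - v = 0" for v
    by (simp add: geom_rep_one fun_eq_iff)
  then show ?case using V.span_zero by auto
next
  case (Cons t ts)
  have "set ts \<subseteq> T" using Cons.prems by simp
  then obtain us where us: "length us = length ts" "\<forall>v. geom_rep (list_prod W ts) v - v \<in> V.span (set us)"
    using Cons.IH by blast
  obtain u where u: "\<forall>v. geom_rep t v - v \<in> V.span {u}"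
    using Cons.prems geom_rep_reflection_rank_one by (meson list.set_intros(1) subsetD)
  have "t \<in> carrier W" using Cons.prems reflection_in_carrier by simp
  moreover have "list_prod W ts \<in> carrier W"
    using Cons.prems by (intro W.list_prod_closed reflections_in_carrier) simp
  ultimately have split: "geom_rep (list_prod W (t # ts)) v - v =
      (geom_rep t (geom_rep (list_prod W ts) v) - geom_rep (list_prod W ts) v) + (geom_rep (list_prod W ts) v - v)"
    for v by (simp add: geom_rep_mult)
  show ?case
  proof (intro exI conjI allI)
    show "length (u # us) = length (t # ts)" using us by simp
    fix v
    let ?y = "geom_rep (list_prod W ts) v"
    have "geom_rep t ?y - ?y \<in> V.span (set (u # us))"
      using u V.span_mono[of "{u}" "set (u # us)"] by auto
    moreover have "?y - v \<in> V.span (set (u # us))"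
      using us(2) V.span_mono[of "set us" "set (u # us)"] by auto
    ultimately show "geom_rep (list_prod W (t # ts)) v - v \<in> V.span (set (u # us))"
      unfolding split by (rule V.span_add)
  qed
qed

text \<open>The vectors \<open>(1 - h) e\<^sub>n\<^sub>+\<^sub>l\<close>, \<open>l < n\<close>, form a triangular system, so the fixed space
  of \<open>h\<close> has codimension at least \<open>n\<close>, while each reflection moves vectors only along a line.\<close>

definition moved_vec :: "nat \<Rightarrow> nat \<Rightarrow> real" where
  "moved_vec l = unit_vec (n + l) - geom_rep h (unit_vec (n + l))"

lemma word_action_fixes_extra_unit_vec:
  "set L \<subseteq> {..<n} \<Longrightarrow> l \<notin> set L \<Longrightarrow> word_action (pos_word L) (unit_vec (n + l)) = unit_vec (n + l)"
proof (induction L)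
  case (Cons i L)
  then have "simple_refl i (unit_vec (n + l)) = unit_vec (n + l)"
    by (simp add: simple_refl_def coroot_unit_vec_extra)
  with Cons show ?case by (simp add: pos_word_def)
qed (simp add: pos_word_def)

lemma word_action_other_coord:
  "m \<notin> set L \<Longrightarrow> word_action (pos_word L) v m = v m"
  by (induction L arbitrary: v) (auto simp: pos_word_def simple_refl_other_coord)

lemma moved_vec_triangular:
  assumes l: "l < n" "l \<le> m"
  shows "moved_vec l m = unit_vec l m"
proof -
  have split: "[0..<n] = [0..<l] @ l # [Suc l..<n]"
    using l upt_add_eq_append[of 0 l "n - l"] by (simp add: upt_conv_Cons)
  have "h = pres_class {..<n} RW (pos_word [0..<n])"
    by (subst class_eq_list_prod_gens) (auto simp: h_eq pos_word_def comp_def)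
  then have "geom_rep h (unit_vec (n + l)) =
      word_action (pos_word [0..<l]) (simple_refl l (word_action (pos_word [Suc l..<n]) (unit_vec (n + l))))"
    by (simp add: geom_rep_class split pos_word_def word_action_append)
  also have "word_action (pos_word [Suc l..<n]) (unit_vec (n + l)) = unit_vec (n + l)"
    by (rule word_action_fixes_extra_unit_vec) auto
  finally have "geom_rep h (unit_vec (n + l)) m = simple_refl l (unit_vec (n + l)) m"
    using l by (simp add: word_action_other_coord)
  then show ?thesis
    using l by (simp add: moved_vec_def simple_refl_def coroot_unit_vec_extra)
qed

lemma moved_vecs_independent: "k \<le> n \<Longrightarrow> V.independent (moved_vec ` {..<k})"
proof (induction k)
  case 0
  then show ?case by (simp add: V.independent_empty)
next
  case (Suc k)
  have "V.span (moved_vec ` {..<k}) \<subseteq> {v. v k = 0}"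
  proof (rule V.span_minimal)
    show "moved_vec ` {..<k} \<subseteq> {v. v k = 0}"
      using Suc.prems by (auto simp: moved_vec_triangular unit_vec_def)
    show "V.subspace {v. v k = 0}"
      by (auto simp: V.subspace_def scale_fun_def)
  qed
  moreover have "moved_vec k k = 1"
    using Suc.prems by (simp add: moved_vec_triangular unit_vec_def)
  ultimately have "moved_vec k \<notin> V.span (moved_vec ` {..<k})" by auto
  then show ?case
    using Suc by (simp add: lessThan_Suc V.independent_insertI)
qed

lemma inj_on_moved_vec: "inj_on moved_vec {..<n}"
proof -
  have "moved_vec l \<noteq> moved_vec l'" if "l < l'" "l' < n" for l l'
  proof -
    have "moved_vec l l' = 0" "moved_vec l' l' = 1"
      using that by (simp_all add: moved_vec_triangular unit_vec_def)
    then show ?thesis by auto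
  qed
  then show ?thesis
    by (metis inj_onI lessThan_iff linorder_neqE_nat)
qed

lemma reflection_factorization_h_length:
  assumes ts: "set ts \<subseteq> T" "list_prod W ts = h"
  shows "n \<le> length ts"
proof -
  obtain us where us: "length us = length ts" "\<forall>v. geom_rep h v - v \<in> V.span (set us)"
    using geom_rep_reflection_product[OF ts(1)] ts(2) by auto
  have "moved_vec ` {..<n} \<subseteq> V.span (set us)"
  proof
    fix x
    assume "x \<in> moved_vec ` {..<n}"
    then obtain l where x: "x = moved_vec l" by auto
    have "- (geom_rep h (unit_vec (n + l)) - unit_vec (n + l)) \<in> V.span (set us)"
      using us(2) by (intro V.span_neg) blast
    then show "x \<in> V.span (set us)" by (simp add: x moved_vec_def)
  qed
  then have "card (moved_vec ` {..<n}) \<le> card (set us)"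
    using V.independent_span_bound[of "set us" "moved_vec ` {..<n}"] moved_vecs_independent[of n] by auto
  also have "\<dots> \<le> length ts" using card_length[of us] us(1) by simp
  finally show ?thesis using inj_on_moved_vec by (simp add: card_image)
qed

lemma len_T_h: "len_T h = n"
proof (rule antisym)
  have "set (map s [0..<n]) \<subseteq> T" using gen_reflection by auto
  then show "len_T h \<le> n" using len_T_le[of "map s [0..<n]" h] by (simp add: h_eq)
  obtain ts where "set ts \<subseteq> T" "length ts = len_T h" "list_prod W ts = h"
    using len_T_reduced_factorization[OF h_in_carrier] .
  then show "n \<le> len_T h" using reflection_factorization_h_length by metis
qed

end

section \<open>Hurwitz action on reduced reflection factorizations of \<open>h\<close>\<close>

context coxeter_system
begin

abbreviation "XD \<equiv> dual_gens n M"
abbreviation "RD \<equiv> dual_relators n M"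
abbreviation "D \<equiv> dual_artin_group n M"
abbreviation "dual_gen \<equiv> pres_gen XD RD"

lemma dual_artin_group_eq: "D = presented_group XD RD"
  by (simp add: dual_artin_group_def)

sublocale D: group D
  by (simp add: dual_artin_group_eq group_presented_group)

lemma dual_gen_in_carrier: "t \<in> XD \<Longrightarrow> dual_gen t \<in> carrier D"
  by (simp add: pres_gen_def dual_artin_group_eq pres_class_in_carrier)

lemma red_T_h_iff: "ts \<in> red_T n M h \<longleftrightarrow> length ts = n \<and> set ts \<subseteq> T \<and> list_prod W ts = h"
  by (auto simp: red_T_def len_T_h cox_prod_eq_list_prod)

lemma len_T_split_h:
  assumes x: "x \<in> carrier W" and y: "y \<in> carrier W" and xy: "x \<otimes>\<^bsub>W\<^esub> y = h"
    and px: "len_T x \<le> p" and qy: "len_T y \<le> q" and pq: "p + q = n"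
  shows "len_T x = p" "T_le n M x h"
proof -
  have "n \<le> len_T x + len_T y" using len_T_mult_le[OF x y] xy len_T_h by simp
  then have "len_T x = p" "len_T y = q" using px qy pq by auto
  then show "len_T x = p" by simp
  moreover have "inv\<^bsub>W\<^esub> x \<otimes>\<^bsub>W\<^esub> h = y" using x y by (simp add: W.inv_mult_cancel_left flip: xy)
  ultimately show "T_le n M x h" unfolding T_le_def using \<open>len_T x = p\<close> \<open>len_T y = q\<close> pq len_T_h by simp
qed

lemma red_T_h_nth_dual_gen:
  assumes ts: "ts \<in> red_T n M h" and i: "i < n"
  shows "ts ! i \<in> XD"
proof -
  have ts: "set ts \<subseteq> T" "length ts = n" "list_prod W ts = h" using ts by (auto simp: red_T_h_iff)
  let ?a = "ts ! i" and ?E = "move_to_front ts i"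
  have a: "?a \<in> T" using ts i by auto
  then have aW: "?a \<in> carrier W" by (rule reflection_in_carrier)
  have E: "set ?E \<subseteq> T" "length ?E = n - 1"
    using move_to_front_reflections length_move_to_front ts i by auto
  have "?a \<otimes>\<^bsub>W\<^esub> list_prod W ?E = h" using list_prod_move_to_front[of ts i] ts i by simp
  moreover have "len_T (list_prod W ?E) \<le> n - 1" using len_T_le[OF E(1)] E by simp
  ultimately have "T_le n M ?a h"
    using len_T_split_h[OF aW W.list_prod_closed[OF reflections_in_carrier[OF E(1)]]]
      len_T_reflection_le[OF a(1)] i by simp
  with a aW show ?thesis by (simp add: dual_gens_def nc_interval_def)
qed

lemma red_T_h_pair:
  assumes ts: "ts \<in> red_T n M h" and ij: "i < j" "j < n"
  shows "len_T (ts ! i \<otimes>\<^bsub>W\<^esub> ts ! j) = 2" "ts ! i \<otimes>\<^bsub>W\<^esub> ts ! j \<in> nc_interval n M"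
proof -
  have ts: "set ts \<subseteq> T" "length ts = n" "list_prod W ts = h" using ts by (auto simp: red_T_h_iff)
  let ?a = "ts ! i" and ?b = "ts ! j"
  let ?E1 = "move_to_front ts i" let ?E2 = "move_to_front ?E1 (j - 1)"
  have ab: "?a \<in> T" "?b \<in> T" using ts ij by auto
  then have abW: "?a \<otimes>\<^bsub>W\<^esub> ?b \<in> carrier W" using reflection_in_carrier by auto
  have E1: "set ?E1 \<subseteq> T" "length ?E1 = n - 1"
    using move_to_front_reflections length_move_to_front ts ij by auto
  have E2: "set ?E2 \<subseteq> T" "length ?E2 = n - 2"
    using move_to_front_reflections[OF E1(1)] length_move_to_front[of "j - 1" ?E1] E1 ij by auto
  have E2W: "list_prod W ?E2 \<in> carrier W"
    using E2(1) by (intro W.list_prod_closed reflections_in_carrier)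
  have "h = ?a \<otimes>\<^bsub>W\<^esub> (?b \<otimes>\<^bsub>W\<^esub> list_prod W ?E2)"
    using list_prod_move_to_front[of ts i] list_prod_move_to_front[OF E1(1), of "j - 1"]
      nth_move_to_front[of i j ts] ts E1 ij by simp
  then have "(?a \<otimes>\<^bsub>W\<^esub> ?b) \<otimes>\<^bsub>W\<^esub> list_prod W ?E2 = h"
    using ab E2W reflection_in_carrier by (simp add: W.m_assoc)
  moreover have "len_T (?a \<otimes>\<^bsub>W\<^esub> ?b) \<le> 2"
    using len_T_le[of "[?a, ?b]"] ab reflection_in_carrier by simp
  moreover have "len_T (list_prod W ?E2) \<le> n - 2" using len_T_le[OF E2(1)] E2 by simp
  ultimately have "len_T (?a \<otimes>\<^bsub>W\<^esub> ?b) = 2" "T_le n M (?a \<otimes>\<^bsub>W\<^esub> ?b) h"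
    using len_T_split_h[OF abW E2W] ij by auto
  then show "len_T (?a \<otimes>\<^bsub>W\<^esub> ?b) = 2" "?a \<otimes>\<^bsub>W\<^esub> ?b \<in> nc_interval n M"
    using abW by (auto simp: nc_interval_def)
qed

lemma red_T_pair:
  "x \<in> T \<Longrightarrow> y \<in> T \<Longrightarrow> len_T c = 2 \<Longrightarrow> x \<otimes>\<^bsub>W\<^esub> y = c \<Longrightarrow> [x, y] \<in> red_T n M c"
  using reflection_in_carrier by (simp add: red_T_def cox_prod_eq_list_prod)

lemma dual_relation:
  assumes "c \<in> nc_interval n M" "[x, y] \<in> red_T n M c" "[x', y'] \<in> red_T n M c" "x' \<in> XD" "y' \<in> XD"
  shows "dual_gen x \<otimes>\<^bsub>D\<^esub> dual_gen y = dual_gen x' \<otimes>\<^bsub>D\<^esub> dual_gen y'"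
proof -
  have "eq_relator (pos_word [x, y]) (pos_word [x', y']) \<in> RD"
    unfolding dual_relators_def using assms(1-3) by blast
  then have "pres_rel XD RD (pos_word [x, y]) (pos_word [x', y'])"
    by (rule pres_rel_eq_relator) (use assms(4,5) in \<open>auto simp: pos_word_def\<close>)
  then show ?thesis
    by (simp add: pres_gen_def dual_artin_group_eq presented_group_mult pres_class_eq_iff pos_word_def)
qed

lemma hurwitz_gen_reflections:
  assumes ts: "set ts \<subseteq> T" and i: "i + 1 < length ts"
  obtains x y where "hurwitz_gen W (i, b) ts = ts[i := x, i + 1 := y]" "x \<in> T" "y \<in> T"
    "x \<otimes>\<^bsub>W\<^esub> y = ts ! i \<otimes>\<^bsub>W\<^esub> ts ! (i + 1)" "if b then y = ts ! i else x = ts ! (i + 1)"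
proof -
  let ?a = "ts ! i" and ?b = "ts ! (i + 1)"
  have ab: "?a \<in> T" "?b \<in> T" using ts i by auto
  then have abW: "?a \<in> carrier W" "?b \<in> carrier W" using reflection_in_carrier by auto
  show ?thesis
  proof (cases b)
    case True
    let ?x = "?a \<otimes>\<^bsub>W\<^esub> ?b \<otimes>\<^bsub>W\<^esub> inv\<^bsub>W\<^esub> ?a"
    have "?x \<otimes>\<^bsub>W\<^esub> ?a = ?a \<otimes>\<^bsub>W\<^esub> ?b" using abW by (simp add: W.m_assoc)
    with True ab abW show ?thesis
      by (intro that[of ?x ?a]) (auto simp: hurwitz_gen_def intro: reflection_conj)
  next
    case False
    let ?y = "inv\<^bsub>W\<^esub> ?b \<otimes>\<^bsub>W\<^esub> ?a \<otimes>\<^bsub>W\<^esub> ?b"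
    have "?b \<otimes>\<^bsub>W\<^esub> ?y = ?a \<otimes>\<^bsub>W\<^esub> ?b" using abW by (simp add: W.m_assoc W.mult_inv_cancel_left)
    moreover have "?y \<in> T" using reflection_conj[of ?a "inv\<^bsub>W\<^esub> ?b"] ab abW by simp
    ultimately show ?thesis
      using False ab by (intro that[of ?b ?y]) (auto simp: hurwitz_gen_def)
  qed
qed

lemma red_T_h_hurwitz_gen:
  assumes ts: "ts \<in> red_T n M h" and i: "i + 1 < n"
  shows "hurwitz_gen W (i, b) ts \<in> red_T n M h"
proof -
  have ts: "set ts \<subseteq> T" "length ts = n" "list_prod W ts = h" using ts by (auto simp: red_T_h_iff)
  obtain x y where xy: "hurwitz_gen W (i, b) ts = ts[i := x, i + 1 := y]" "x \<in> T" "y \<in> T"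
    "x \<otimes>\<^bsub>W\<^esub> y = ts ! i \<otimes>\<^bsub>W\<^esub> ts ! (i + 1)"
    using hurwitz_gen_reflections[OF ts(1)] ts(2) i by metis
  have "set (ts[i := x, i + 1 := y]) \<subseteq> T"
    using ts(1) xy(2,3) by (auto dest!: set_update_subset_insert[THEN subsetD])
  moreover have "list_prod W (ts[i := x, i + 1 := y]) = h"
    using W.list_prod_update_pair[of i ts x y] ts xy(2-4) i reflections_in_carrier reflection_in_carrier
    by simp
  ultimately show ?thesis using ts(2) by (simp add: red_T_h_iff xy(1))
qed

lemma dual_gen_hurwitz_gen:
  assumes ts: "ts \<in> red_T n M h" and i: "i + 1 < n"
  shows "hurwitz_gen D (i, b) (map dual_gen ts) = map dual_gen (hurwitz_gen W (i, b) ts)"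
proof -
  have ts': "set ts \<subseteq> T" "length ts = n" using ts by (auto simp: red_T_h_iff)
  let ?a = "ts ! i" and ?b = "ts ! (i + 1)"
  obtain x y where xy: "hurwitz_gen W (i, b) ts = ts[i := x, i + 1 := y]" "x \<in> T" "y \<in> T"
    "x \<otimes>\<^bsub>W\<^esub> y = ?a \<otimes>\<^bsub>W\<^esub> ?b" "if b then y = ?a else x = ?b"
    using hurwitz_gen_reflections[OF ts'(1)] ts'(2) i by metis
  have new: "ts[i := x, i + 1 := y] \<in> red_T n M h"
    using red_T_h_hurwitz_gen[OF ts i, of b] xy(1) by simp
  have xyD: "x \<in> XD" "y \<in> XD"
    using red_T_h_nth_dual_gen[OF new, of i] red_T_h_nth_dual_gen[OF new, of "i + 1"] i ts'(2)
    by (simp_all add: nth_list_update)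
  have abD: "?a \<in> XD" "?b \<in> XD" using red_T_h_nth_dual_gen[OF ts] i by auto
  have c: "len_T (?a \<otimes>\<^bsub>W\<^esub> ?b) = 2" "?a \<otimes>\<^bsub>W\<^esub> ?b \<in> nc_interval n M"
    using red_T_h_pair[OF ts, of i "i + 1"] i by auto
  have "?a \<in> T" "?b \<in> T" using ts' i by auto
  then have "dual_gen x \<otimes>\<^bsub>D\<^esub> dual_gen y = dual_gen ?a \<otimes>\<^bsub>D\<^esub> dual_gen ?b"
    using dual_relation[OF c(2) red_T_pair[OF xy(2,3) c(1) xy(4)] red_T_pair[OF _ _ c(1) refl] abD] by simp
  moreover have "if b then dual_gen y = dual_gen ?a else dual_gen x = dual_gen ?b"
    using xy(5) by (simp split: if_splits)
  moreover have "set (map dual_gen ts) \<subseteq> carrier D"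
  proof
    fix g
    assume "g \<in> set (map dual_gen ts)"
    then obtain k where "k < n" "g = dual_gen (ts ! k)" using ts'(2) by (auto simp: in_set_conv_nth)
    then show "g \<in> carrier D" using red_T_h_nth_dual_gen[OF ts] dual_gen_in_carrier by simp
  qed
  ultimately have "hurwitz_gen D (i, b) (map dual_gen ts) = (map dual_gen ts)[i := dual_gen x, i + 1 := dual_gen y]"
    using i ts'(2) xyD dual_gen_in_carrier by (intro D.hurwitz_gen_eq_update) simp_all
  then show ?thesis by (simp add: xy(1) map_update)
qed

lemma dual_gen_hurwitz_word:
  assumes ts: "ts \<in> red_T n M h" and w: "set w \<subseteq> {..<n - 1} \<times> UNIV"
  shows "hurwitz_word D w (map dual_gen ts) = map dual_gen (hurwitz_word W w ts)
    \<and> hurwitz_word W w ts \<in> red_T n M h"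
  using w
proof (induction w)
  case Nil
  then show ?case using ts by simp
next
  case (Cons x w)
  obtain i b where x: "x = (i, b)" by fastforce
  have i: "i + 1 < n" using Cons.prems x by auto
  with Cons show ?case
    using dual_gen_hurwitz_gen[of _ i b] red_T_h_hurwitz_gen[of _ i b] by (simp add: x)
qed

end

section \<open>The Artin relations in \<open>W\<close> and in the dual Artin group\<close>

lemma length_alt_word [simp]: "length (alt_word i j k) = k"
  by (simp add: alt_word_def)

lemma alt_word_nth: "l < k \<Longrightarrow> alt_word i j k ! l = (if even l then i else j)"
  by (simp add: alt_word_def)

lemma alt_word_append_rev: "alt_word i j k @ rev (alt_word j i k) = alt_word i j (2 * k)"
proof (rule nth_equalityI)
  show "length (alt_word i j k @ rev (alt_word j i k)) = length (alt_word i j (2 * k))"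
    by (simp add: alt_word_def)
  fix p
  assume "p < length (alt_word i j k @ rev (alt_word j i k))"
  then have p: "p < 2 * k" by (simp add: alt_word_def)
  show "(alt_word i j k @ rev (alt_word j i k)) ! p = alt_word i j (2 * k) ! p"
  proof (cases "p < k")
    case True
    then show ?thesis using p by (simp add: nth_append alt_word_nth alt_word_def)
  next
    case False
    then have "(alt_word i j k @ rev (alt_word j i k)) ! p = alt_word j i k ! (k - 1 - (p - k))"
      using p by (simp add: nth_append rev_nth alt_word_def)
    moreover have "even (k - 1 - (p - k)) \<longleftrightarrow> odd p" using p False by presburger
    ultimately show ?thesis using p False by (simp add: alt_word_nth)
  qed
qed

lemma alt_word_even: "alt_word i j (2 * k) = concat (replicate k [i, j])"
proof (induction k)
  case 0
  then show ?case by (simp add: alt_word_def)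
next
  case (Suc k)
  have "alt_word i j (Suc (Suc m)) = i # j # alt_word i j m" for m
    by (rule nth_equalityI) (auto simp: alt_word_nth nth_Cons split: nat.splits)
  moreover have "2 * Suc k = Suc (Suc (2 * k))" by simp
  ultimately show ?case using Suc by simp
qed

context coxeter_system
begin

abbreviation "RA \<equiv> artin_relators n M"
abbreviation "A \<equiv> artin_group n M"

lemma artin_relator_coxeter: "r \<in> RA \<Longrightarrow> pres_rel {..<n} RW r []"
proof -
  assume "r \<in> RA"
  then obtain i j k where r: "r = eq_relator (pos_word (alt_word i j k)) (pos_word (alt_word j i k))"
    "i < j" "j < n" "M i j = enat k"
    unfolding artin_relators_def by blast
  let ?c = "concat (replicate k [(i, True), (j, True)])"
  have "i < n" using r by simp
  then have c: "?c \<in> RW" unfolding coxeter_relators_def using r by blast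
  have alphabet: "set r \<subseteq> {..<n} \<times> UNIV" "set ?c \<subseteq> {..<n} \<times> UNIV"
    using r(1-3) by (auto simp: eq_relator_def pos_word_def word_inv_def alt_word_def)
  have "map fst r = alt_word i j k @ rev (alt_word j i k)"
    using r(1) by (simp add: eq_relator_def map_fst_word_inv pos_word_def comp_def)
  also have "\<dots> = map fst ?c" by (simp add: alt_word_append_rev alt_word_even map_concat)
  finally have "pres_class {..<n} RW r = pres_class {..<n} RW ?c"
    using class_eq_list_prod_gens[OF alphabet(1)] class_eq_list_prod_gens[OF alphabet(2)] by simp
  also have "\<dots> = pres_class {..<n} RW []"
    using pres_rel_relator_trivial[OF c] by (simp add: pres_class_eq_iff)
  finally show ?thesis by (simp add: pres_class_eq_iff)
qed

lemma gens_red_T_h: "map s [0..<n] \<in> red_T n M h"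
  unfolding red_T_h_iff using gen_reflection by (auto simp: h_eq)

lemma gen_dual_gen: "i < n \<Longrightarrow> s i \<in> XD"
  using red_T_h_nth_dual_gen[OF gens_red_T_h, of i] by simp

text \<open>The reflections \<open>s\<^sub>i (s\<^sub>i s\<^sub>j)\<^sup>l\<close> of a dihedral parabolic subgroup form a chain of
  period \<open>m\<^sub>i\<^sub>j\<close> whose consecutive products are all \<open>s\<^sub>i s\<^sub>j\<close>; in the dual Artin group
  this chain yields the braid relation between \<open>s\<^sub>i\<close> and \<open>s\<^sub>j\<close>.\<close>

context
  fixes i j k
  assumes ij: "i < j" "j < n" and Mk: "M i j = enat k"
begin

definition dihedral_refl :: "nat \<Rightarrow> (nat \<times> bool) list set" where
  "dihedral_refl l = s i \<otimes>\<^bsub>W\<^esub> (s i \<otimes>\<^bsub>W\<^esub> s j) [^]\<^bsub>W\<^esub> l"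

lemma gen_pair_pow_order: "(s i \<otimes>\<^bsub>W\<^esub> s j) [^]\<^bsub>W\<^esub> k = \<one>\<^bsub>W\<^esub>"
proof -
  have "(s i \<otimes>\<^bsub>W\<^esub> s j) [^]\<^bsub>W\<^esub> m = pres_class {..<n} RW (concat (replicate m [(i, True), (j, True)]))" for m
  proof (induction m)
    case 0
    then show ?case by (simp add: class_Nil)
  next
    case (Suc m)
    have "concat (replicate m [(i, True), (j, True)]) @ [(i, True), (j, True)] =
        concat (replicate (Suc m) [(i, True), (j, True)])"
      by (induction m) auto
    with Suc show ?case by (simp add: gen_eq_class class_mult)
  qed
  moreover have "i < n" using ij by simp
  then have "concat (replicate k [(i, True), (j, True)]) \<in> RW"
    unfolding coxeter_relators_def using ij Mk by blast
  ultimately show ?thesis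
    using pres_rel_relator_trivial by (simp add: pres_class_eq_iff flip: class_Nil)
qed

lemma dihedral_refl_in_carrier: "dihedral_refl l \<in> carrier W"
  using ij by (simp add: dihedral_refl_def)

lemma dihedral_refl_Suc: "dihedral_refl (Suc l) = dihedral_refl l \<otimes>\<^bsub>W\<^esub> (s i \<otimes>\<^bsub>W\<^esub> s j)"
  using ij by (simp add: dihedral_refl_def W.m_assoc)

lemma dihedral_refl_0: "dihedral_refl 0 = s i"
  using ij by (simp add: dihedral_refl_def)

lemma dihedral_refl_1: "dihedral_refl 1 = s j"
  using ij dihedral_refl_Suc[of 0] by (simp add: dihedral_refl_0 gen_square flip: W.m_assoc)

lemma dihedral_refl_reflection: "dihedral_refl l \<in> T \<and> dihedral_refl (Suc l) \<in> T"
proof (induction l)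
  case 0
  then show ?case using ij dihedral_refl_1 by (simp add: dihedral_refl_0 gen_reflection)
next
  case (Suc l)
  have "dihedral_refl (Suc (Suc l)) = dihedral_refl (Suc l) \<otimes>\<^bsub>W\<^esub> dihedral_refl l \<otimes>\<^bsub>W\<^esub> dihedral_refl (Suc l)"
    using Suc dihedral_refl_in_carrier ij
    by (simp add: dihedral_refl_Suc[of "Suc l"] dihedral_refl_Suc[of l] W.m_assoc)
  then show ?case using Suc reflection_conj_reflection by simp
qed

lemma dihedral_refl_prod: "dihedral_refl l \<otimes>\<^bsub>W\<^esub> dihedral_refl (Suc l) = s i \<otimes>\<^bsub>W\<^esub> s j"
  using dihedral_refl_reflection[of l] ij by (simp add: dihedral_refl_Suc)

lemma dihedral_refl_period: "dihedral_refl (l + k) = dihedral_refl l"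
  using ij by (simp add: dihedral_refl_def W.nat_pow_mult[symmetric] gen_pair_pow_order W.m_assoc)

lemma gen_pair_in_nc_interval:
  "len_T (s i \<otimes>\<^bsub>W\<^esub> s j) = 2" "s i \<otimes>\<^bsub>W\<^esub> s j \<in> nc_interval n M"
  using red_T_h_pair[OF gens_red_T_h ij] ij by auto

lemma dihedral_refl_dual_gen: "dihedral_refl l \<in> XD"
proof -
  let ?c = "s i \<otimes>\<^bsub>W\<^esub> s j" and ?r = "dihedral_refl l" and ?r' = "dihedral_refl (Suc l)"
  have r: "?r \<in> T" "?r' \<in> T" using dihedral_refl_reflection by auto
  have cW: "?c \<in> carrier W" using ij by simp
  have rest: "inv\<^bsub>W\<^esub> ?c \<otimes>\<^bsub>W\<^esub> h \<in> carrier W" using cW h_in_carrier by simp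
  have "len_T (inv\<^bsub>W\<^esub> ?c \<otimes>\<^bsub>W\<^esub> h) = n - 2"
    using gen_pair_in_nc_interval len_T_h by (auto simp: nc_interval_def T_le_def)
  let ?y = "?r' \<otimes>\<^bsub>W\<^esub> (inv\<^bsub>W\<^esub> ?c \<otimes>\<^bsub>W\<^esub> h)"
  have yW: "?y \<in> carrier W" using reflection_in_carrier[OF r(2)] rest by simp
  have "len_T ?y \<le> n - 1"
    using len_T_mult_le[OF reflection_in_carrier[OF r(2)] rest] len_T_reflection_le[OF r(2)]
      \<open>len_T (inv\<^bsub>W\<^esub> ?c \<otimes>\<^bsub>W\<^esub> h) = n - 2\<close> ij by simp
  moreover have "?r \<otimes>\<^bsub>W\<^esub> ?y = h"
    using dihedral_refl_in_carrier cW h_in_carrier dihedral_refl_prod[of l]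
    by (simp add: W.mult_inv_cancel_left flip: W.m_assoc)
  moreover have "1 + (n - 1) = n" using ij by simp
  ultimately have "T_le n M ?r h"
    using len_T_split_h(2)[OF dihedral_refl_in_carrier yW _ len_T_reflection_le[OF r(1)]] by blast
  then show ?thesis using r dihedral_refl_in_carrier by (simp add: dual_gens_def nc_interval_def)
qed

lemma artin_relator_dual:
  "pres_rel XD RD (map_letters s (eq_relator (pos_word (alt_word i j k)) (pos_word (alt_word j i k)))) []"
proof -
  let ?g = "\<lambda>l. dual_gen (dihedral_refl l)"
  have g: "?g l \<in> carrier D" for l by (simp add: dihedral_refl_dual_gen dual_gen_in_carrier)
  have chain: "?g l \<otimes>\<^bsub>D\<^esub> ?g (Suc l) = ?g 0 \<otimes>\<^bsub>D\<^esub> ?g (Suc 0)" for l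
    using dual_relation[OF gen_pair_in_nc_interval(2) red_T_pair red_T_pair]
      dihedral_refl_reflection dihedral_refl_prod gen_pair_in_nc_interval(1) dihedral_refl_dual_gen
    by metis
  have alt: "map (dual_gen \<circ> s) (alt_word a b k) =
      map (\<lambda>l. if even l then dual_gen (s a) else dual_gen (s b)) [0..<k]" for a b
    by (simp add: alt_word_def)
  let ?p = "pos_word (map s (alt_word i j k))" and ?q = "pos_word (map s (alt_word j i k))"
  have "list_prod D (map (\<lambda>l. if even l then ?g 0 else ?g 1) [0..<k]) =
      list_prod D (map (\<lambda>l. if even l then ?g 1 else ?g 0) [0..<k])"
    by (rule D.periodic_chain_braid_relation[of ?g, OF g chain]) (rule dihedral_refl_period[THEN arg_cong])
  then have "pres_class XD RD ?p = pres_class XD RD ?q"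
    unfolding dihedral_refl_0 dihedral_refl_1
    by (simp add: pres_class_pos_word alt flip: dual_artin_group_eq)
  moreover have "set ?q \<subseteq> XD \<times> UNIV" using ij gen_dual_gen by (auto simp: pos_word_def alt_word_def)
  ultimately have "pres_rel XD RD (?p @ word_inv ?q) (?q @ word_inv ?q)"
    using pres_rel_append[OF _ pres_rel.pr_refl] by (simp add: pres_class_eq_iff)
  then show ?thesis
    using pres_rel_word_inv_right[OF \<open>set ?q \<subseteq> XD \<times> UNIV\<close>]
    by (auto simp: eq_relator_def map_letters_word_inv map_letters_pos_word intro: pres_rel.pr_trans)
qed

end

end

section \<open>Braid stabilizers\<close>

context coxeter_system
begin

sublocale A: group A
  by (simp add: artin_group_def group_presented_group)

lemma art_gen_eq_class: "art_gen n M i = pres_class {..<n} RA [(i, True)]"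
  by (simp add: art_gen_def pres_gen_def)

lemma art_gens_in_carrier: "set (map (art_gen n M) [0..<n]) \<subseteq> carrier A"
  by (auto simp: art_gen_eq_class artin_group_def pres_class_in_carrier)

definition artin_proj :: "(nat \<times> bool) list set \<Rightarrow> (nat \<times> bool) list set" where
  "artin_proj C = pres_class {..<n} RW (SOME w. w \<in> C)"

lemma artin_proj_hom: "artin_proj \<in> hom A W"
  and artin_proj_gen: "artin_proj (art_gen n M i) = s i"
proof -
  have "id ` {..<n} \<subseteq> {..<n}" by simp
  note induced = induced_hom[of id "{..<n}" "{..<n}" RA RW, OF this, simplified, OF artin_relator_coxeter]
  have "artin_proj = (\<lambda>C. pres_class {..<n} RW (SOME w. w \<in> C))"
    by (simp add: fun_eq_iff artin_proj_def)
  then show "artin_proj \<in> hom A W"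
    using induced(2) by (simp add: artin_group_def coxeter_group_eq)
  show "artin_proj (art_gen n M i) = s i"
    using induced(1)[of "[(i, True)]"] by (simp add: artin_proj_def art_gen_eq_class gen_eq_class)
qed

lemma dual_psi_hom: "dual_psi n M \<in> hom A D"
  and dual_psi_gen: "i < n \<Longrightarrow> dual_psi n M (art_gen n M i) = dual_gen (s i)"
proof -
  have psi: "dual_psi n M = (\<lambda>C. pres_class XD RD (map_letters s (SOME w. w \<in> C)))"
    by (simp add: dual_psi_def map_letters_def fun_eq_iff)
  have "s ` {..<n} \<subseteq> XD" using gen_dual_gen by auto
  note induced = induced_hom[of s "{..<n}" XD RA RD, OF this]
  have rel: "pres_rel XD RD (map_letters s r) []" if "r \<in> RA" for r
    using that artin_relator_dual unfolding artin_relators_def by blast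
  show "dual_psi n M \<in> hom A D"
    using induced(2)[OF rel] by (simp add: psi artin_group_def dual_artin_group_eq)
  show "dual_psi n M (art_gen n M i) = dual_gen (s i)"
    using induced(1)[OF rel, of "[(i, True)]"]
    by (simp add: psi art_gen_eq_class map_letters_def pres_gen_def)
qed

lemma braid_stabilizer_artin_subset:
  "braid_stabilizer n A (map (art_gen n M) [0..<n]) \<subseteq> braid_stabilizer n W (map s [0..<n])"
proof
  fix \<beta>
  assume "\<beta> \<in> braid_stabilizer n A (map (art_gen n M) [0..<n])"
  then have \<beta>: "\<beta> \<in> carrier (braid_group n)"
    and fixed: "hurwitz_word A (SOME w. w \<in> \<beta>) (map (art_gen n M) [0..<n]) = map (art_gen n M) [0..<n]"
    by (auto simp: braid_stabilizer_def hurwitz_act_def)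
  interpret proj: group_hom A W artin_proj
    by (simp add: group_hom_def group_hom_axioms_def artin_proj_hom W.group_axioms A.group_axioms)
  have "hurwitz_word W (SOME w. w \<in> \<beta>) (map s [0..<n])
      = map artin_proj (hurwitz_word A (SOME w. w \<in> \<beta>) (map (art_gen n M) [0..<n]))"
    using proj.hurwitz_word_hom[OF art_gens_in_carrier] braid_group_some_word[OF \<beta>]
    by (simp add: comp_def artin_proj_gen)
  also have "\<dots> = map s [0..<n]" by (simp add: fixed comp_def artin_proj_gen)
  finally show "\<beta> \<in> braid_stabilizer n W (map s [0..<n])"
    using \<beta> by (simp add: braid_stabilizer_def hurwitz_act_def)
qed

lemma braid_stabilizer_coxeter_subset:
  assumes inj: "inj_on (dual_psi n M) (carrier A)"
  shows "braid_stabilizer n W (map s [0..<n]) \<subseteq> braid_stabilizer n A (map (art_gen n M) [0..<n])"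
proof
  fix \<beta>
  assume stab: "\<beta> \<in> braid_stabilizer n W (map s [0..<n])"
  let ?w = "SOME w. w \<in> \<beta>" and ?a = "map (art_gen n M) [0..<n]"
  from stab have \<beta>: "\<beta> \<in> carrier (braid_group n)" and fixed: "hurwitz_word W ?w (map s [0..<n]) = map s [0..<n]"
    by (auto simp: braid_stabilizer_def hurwitz_act_def)
  have w: "set ?w \<subseteq> {..<n - 1} \<times> UNIV" by (rule braid_group_some_word[OF \<beta>])
  interpret psi: group_hom A D "dual_psi n M"
    by (simp add: group_hom_def group_hom_axioms_def dual_psi_hom D.group_axioms A.group_axioms)
  have psi_a: "map (dual_psi n M) ?a = map dual_gen (map s [0..<n])"
    by (simp add: dual_psi_gen)
  have "map (dual_psi n M) (hurwitz_word A ?w ?a) = hurwitz_word D ?w (map (dual_psi n M) ?a)"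
    by (rule psi.hurwitz_word_hom[OF art_gens_in_carrier]) (use w in simp)
  also have "\<dots> = hurwitz_word D ?w (map dual_gen (map s [0..<n]))"
    by (simp only: psi_a)
  also have "\<dots> = map dual_gen (hurwitz_word W ?w (map s [0..<n]))"
    using dual_gen_hurwitz_word[OF gens_red_T_h w] by simp
  also have "\<dots> = map (dual_psi n M) ?a" by (simp only: fixed psi_a)
  moreover have "set (hurwitz_word A ?w ?a) \<union> set ?a \<subseteq> carrier A"
    using A.hurwitz_word_closed[OF art_gens_in_carrier] w art_gens_in_carrier by simp
  ultimately have "hurwitz_word A ?w ?a = ?a"
    using inj_on_map_eq_map inj_on_subset[OF inj] by metis
  then show "\<beta> \<in> braid_stabilizer n A ?a"
    using \<beta> by (simp add: braid_stabilizer_def hurwitz_act_def)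
qed

end

theorem proposition3p8:
  fixes n :: nat and M :: "nat \<Rightarrow> nat \<Rightarrow> enat"
  assumes "coxeter_matrix n M"
    and "dual_psi n M \<in> iso (artin_group n M) (dual_artin_group n M)"
  shows "well_stabilized n M"
proof -
  interpret coxeter_system n M by unfold_locales (rule assms(1))
  have "inj_on (dual_psi n M) (carrier A)"
    using assms(2) by (simp add: iso_def bij_betw_def)
  then show ?thesis
    unfolding well_stabilized_def
    using braid_stabilizer_artin_subset braid_stabilizer_coxeter_subset by blast
qed

end
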